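(* Let $0\le m\le k-1$ and $e\ge 1$ be integers, let $H$ be an $m$-graph on $[k]$ with $l=|E(H)|$ edges, and put $n=e(k-m)+m$ and $f=e(l-1)+1$. Let $Y$ be the set of $H$-built-trees on $[n]$ with $e$ edges that are rooted at $[m]$. Let $A=[e]$, $B=[e]\times[l-1]$, $C=\{[m]\}$, let $\gamma:B\to A$ be the projection to the first coordinate, and for $i\in[e]$ let $X_i=\left[\binom{(k-m)(e-i+1)-1}{k-m-1}\right]$. Then there is a bijection between $Y$ and $$Z=F(A,B,C,\gamma)\times\prod_{i=1}^e\left(X_i\times \mathcal R_H\right).$$ In particular, $$|Y|=f^{e-1}\left(\frac{k!\,l}{\binom km\,|\mathrm{Aut}(H)|}\right)^e\prod_{i=1}^e\binom{(k-m)(e-i+1)-1}{k-m-1}=\frac{(e(k-m))!\,f^{e-1}}{e!}\left(\frac{m!\,l}{|\mathrm{Aut}(H)|}\right)^e.$$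
   Context: For a positive integer $r$, $[r]=\{1,\dots,r\}$, $[0]=\emptyset$, and $[a,b]=\{a,\dots,b\}$. An $r$-graph on a set $V$ is a set of $r$-element subsets (edges) of $V$. Cycle-free functions: given disjoint finite sets $A,B,C$ and a surjection $\gamma:B\to A$, a function $f:A\to B\cup C$ is cycle-free if for every $b\in B$ the sequence $b,(f\circ\gamma)(b),(f\circ\gamma)^2(b),\dots$ eventually reaches an element of $C$ (where the iteration stops); $F(A,B,C,\gamma)$ denotes the set of all cycle-free functions $A\to B\cup C$. $(k,m)$-trees: with vertex set $[n]$, a non-empty $k$-graph without isolated vertices is a $(k,m)$-tree if its edges can be ordered $E_1,\dots,E_e$ so that for every $i\in[2,e]$ there is $j\in[i-1]$ with $|E_i\cap E_j|=m$ and $(E_i\setminus E_j)\cap\bigcup_{h=1}^{i-1}E_h=\emptyset$. An $m$-subset is called a lap. For an $m$-graph $H$ on $[k]$ and a $k$-set $E$, an $H$-graph on $E$ is the image of $H$ under some bijection $[k]\to E$. An $H$-built-tree $(T,\{H_1,\dots,H_e\})$ consists of a $(k,m)$-tree $T$ with edges $E_1,\dots,E_e$ together with $H$-graphs $H_i$ on $E_i$ ($i\in[e]$) such that for all distinct $i,j\in[e]$, if $|E_i\cap E_j|=m$ then $E_i\cap E_j$ is an edge of both $H_i$ and $H_j$. It has $n=e(k-m)+m$ vertices. It is rooted at an $m$-set $L$ if $L\in\bigcup_{i\in[e]}E(H_i)$. $\mathcal R_H$ denotes the set of distinct $H$-graphs on $[k]$ containing $[m]$ as an edge (so $|\mathcal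 R_H|=k!\,l/(|\mathrm{Aut}(H)|\binom km)$), and $\mathrm{Aut}(H)$ is the automorphism group of $H$ (permutations of $[k]$ preserving $E(H)$). *)

theory Defs
  imports Complex_Main "HOL-Library.FuncSet" "HOL-Combinatorics.Permutations"
begin

definition rgraph :: "nat \<Rightarrow> 'a set \<Rightarrow> 'a set set \<Rightarrow> bool" where
  "rgraph r V G \<longleftrightarrow> (\<forall>E\<in>G. E \<subseteq> V \<and> card E = r)"

fun cf_step :: "('a \<Rightarrow> 'b + 'c) \<Rightarrow> ('b \<Rightarrow> 'a) \<Rightarrow> 'b + 'c \<Rightarrow> 'b + 'c" where
  "cf_step f \<gamma> (Inl b) = f (\<gamma> b)"
| "cf_step f \<gamma> (Inr c) = Inr c"

definition cycle_free_funs ::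
  "'a set \<Rightarrow> 'b set \<Rightarrow> 'c set \<Rightarrow> ('b \<Rightarrow> 'a) \<Rightarrow> ('a \<Rightarrow> 'b + 'c) set" where
  "cycle_free_funs A B C \<gamma> =
     {f \<in> A \<rightarrow>\<^sub>E (Inl ` B \<union> Inr ` C).
        \<forall>b\<in>B. \<exists>t c. (cf_step f \<gamma> ^^ t) (Inl b) = Inr c}"

text \<open>(k,m)-trees on vertex set [n] (edges listed in a valid order, 0-based).\<close>
definition km_tree :: "nat \<Rightarrow> nat \<Rightarrow> nat \<Rightarrow> nat set set \<Rightarrow> bool" where
  "km_tree k m n T \<longleftrightarrow>
     T \<noteq> {} \<and> rgraph k {1..n} T \<and> \<Union>T = {1..n} \<and>
     (\<exists>Es. distinct Es \<and> set Es = T \<and>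
        (\<forall>i. 1 \<le> i \<and> i < length Es \<longrightarrow>
           (\<exists>j<i. card (Es ! i \<inter> Es ! j) = m \<and>
                  (Es ! i - Es ! j) \<inter> \<Union>(set (take i Es)) = {})))"

definition H_graph_on :: "nat \<Rightarrow> nat set set \<Rightarrow> nat set \<Rightarrow> nat set set \<Rightarrow> bool" where
  "H_graph_on k H E G \<longleftrightarrow> (\<exists>\<sigma>. bij_betw \<sigma> {1..k} E \<and> G = (\<lambda>L. \<sigma> ` L) ` H)"

definition H_built_tree ::
  "nat \<Rightarrow> nat \<Rightarrow> nat set set \<Rightarrow> nat \<Rightarrow> nat set set \<Rightarrow> (nat set \<Rightarrow> nat set set) \<Rightarrow> bool" where
  "H_built_tree k m H n T Hs \<longleftrightarrow>
     km_tree k m n T \<and>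
     (\<forall>E\<in>T. H_graph_on k H E (Hs E)) \<and>
     (\<forall>E. E \<notin> T \<longrightarrow> Hs E = {}) \<and>
     (\<forall>E\<in>T. \<forall>E'\<in>T. E \<noteq> E' \<and> card (E \<inter> E') = m \<longrightarrow>
          E \<inter> E' \<in> Hs E \<and> E \<inter> E' \<in> Hs E')"

definition rooted_at :: "nat set set \<Rightarrow> (nat set \<Rightarrow> nat set set) \<Rightarrow> nat set \<Rightarrow> bool" where
  "rooted_at T Hs L \<longleftrightarrow> L \<in> (\<Union>E\<in>T. Hs E)"

definition R_H :: "nat \<Rightarrow> nat \<Rightarrow> nat set set \<Rightarrow> nat set set set" where
  "R_H k m H = {G. H_graph_on k H {1..k} G \<and> {1..m} \<in> G}"

definition Aut :: "nat \<Rightarrow> nat set set \<Rightarrow> (nat \<Rightarrow> nat) set" where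
  "Aut k H = {\<sigma>. \<sigma> permutes {1..k} \<and> (\<lambda>L. \<sigma> ` L) ` H = H}"

end

theory Submission
  imports Defs
begin

text \<open>A rooted \<open>H\<close>-built tree is encoded by a triple. Removing from every edge the lap along
  which it is attached leaves \<open>e\<close> blocks of \<open>k - m\<close> new vertices partitioning \<open>[m+1..n]\<close>.
  Reading the \<open>H\<close>-graph of every edge through the order-preserving identification of
  (lap, block) with \<open>([m], [m+1..k])\<close> gives an element of \<open>R_H\<close> per block. Recording for
  every block whether its edge hangs at the root \<open>[m]\<close> or along one of the \<open>l - 1\<close> non-root
  edges of the \<open>H\<close>-graph of another block gives a cycle-free map, because the parent pointers
  lead to the root. Decoding follows the parent pointers, and an edge order by depth recovers the
  code from the tree.

  The three components are counted separately: partitions into blocks by choosing the block of a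
  fixed point, \<open>|R_H| binom(k,m) |Aut H| = k! l\<close> by double counting pairs (copy of \<open>H\<close>, edge),
  and cycle-free maps by removing their roots, which gives \<open>c (c + x |A|)^(|A| - 1)\<close> with
  \<open>c = |C|\<close> and fibres of size \<open>x\<close>. The set \<open>Z\<close> has the same size as \<open>Y\<close>, whence the bijection,
  and the closed formula is arithmetic.\<close>


section \<open>Cycle-free maps\<close>

text \<open>A variant of \<^const>\<open>cycle_free_funs\<close> in which \<open>B\<close> and \<open>C\<close> are disjoint subsets of one
  type; the walk leaves every point outside \<open>B\<close> fixed.\<close>

definition walk_step :: "('a \<Rightarrow> 'd) \<Rightarrow> ('d \<Rightarrow> 'a) \<Rightarrow> 'd set \<Rightarrow> 'd \<Rightarrow> 'd" where
  "walk_step f \<gamma> B y = (if y \<in> B then f (\<gamma> y) else y)"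

definition cycle_free_maps :: "'a set \<Rightarrow> 'd set \<Rightarrow> 'd set \<Rightarrow> ('d \<Rightarrow> 'a) \<Rightarrow> ('a \<Rightarrow> 'd) set" where
  "cycle_free_maps A B C \<gamma> =
     {f \<in> A \<rightarrow>\<^sub>E (B \<union> C). \<forall>b\<in>B. \<exists>t. (walk_step f \<gamma> B ^^ t) b \<in> C}"

lemma funpow_Suc_apply: "(g ^^ Suc t) y = (g ^^ t) (g y)"
  by (simp add: funpow_Suc_right del: funpow.simps)

lemma finite_cycle_free_maps:
  assumes "finite A" "finite B" "finite C"
  shows "finite (cycle_free_maps A B C \<gamma>)"
proof (rule finite_subset)
  show "cycle_free_maps A B C \<gamma> \<subseteq> A \<rightarrow>\<^sub>E (B \<union> C)" by (auto simp: cycle_free_maps_def)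
qed (use assms in \<open>intro finite_PiE, auto\<close>)

lemma cycle_free_maps_undefined: "h \<in> cycle_free_maps A B C \<gamma> \<Longrightarrow> x \<notin> A \<Longrightarrow> h x = undefined"
  by (auto simp: cycle_free_maps_def PiE_def extensional_def)

lemma reach_implies_root:
  assumes "f \<in> A \<rightarrow>\<^sub>E (B \<union> C)" "B \<inter> C = {}" "\<gamma> ` B \<subseteq> A"
  shows "b \<in> B \<Longrightarrow> (walk_step f \<gamma> B ^^ t) b \<in> C \<Longrightarrow> \<exists>a\<in>A. f a \<in> C"
proof (induction t arbitrary: b)
  case 0 then show ?case using assms by auto
next
  case (Suc t)
  have st: "walk_step f \<gamma> B b = f (\<gamma> b)" using Suc.prems by (simp add: walk_step_def)
  have gb: "\<gamma> b \<in> A" using assms Suc.prems by auto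
  show ?case
  proof (cases "f (\<gamma> b) \<in> C")
    case True then show ?thesis using gb by auto
  next
    case False
    then have "f (\<gamma> b) \<in> B" using assms(1) gb by auto
    moreover have "(walk_step f \<gamma> B ^^ t) (f (\<gamma> b)) \<in> C"
      using Suc.prems(2) by (simp only: funpow_Suc_apply st)
    ultimately show ?thesis by (rule Suc.IH)
  qed
qed

lemma cycle_free_map_has_root:
  assumes f: "f \<in> cycle_free_maps A B C \<gamma>" and "B \<inter> C = {}" "\<gamma> ` B \<subseteq> A" "A \<noteq> {}"
  shows "\<exists>a\<in>A. f a \<in> C"
proof -
  have fP: "f \<in> A \<rightarrow>\<^sub>E (B \<union> C)" using f by (simp add: cycle_free_maps_def)
  obtain a0 where a0: "a0 \<in> A" using assms(4) by auto
  show ?thesis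
  proof (cases "f a0 \<in> C")
    case False
    then have b: "f a0 \<in> B" using fP a0 by auto
    then obtain t where "(walk_step f \<gamma> B ^^ t) (f a0) \<in> C" using f by (auto simp: cycle_free_maps_def)
    from reach_implies_root[OF fP assms(2,3) b this] show ?thesis .
  qed (use a0 in auto)
qed

text \<open>Removing the set \<open>S\<close> of roots: the points of \<open>B\<close> above \<open>S\<close> become the new roots.\<close>

lemma reach_restrict_roots:
  assumes f: "f \<in> A \<rightarrow>\<^sub>E (B \<union> C)" and S: "S = {a\<in>A. f a \<in> C}"
    and g: "\<gamma> ` B \<subseteq> A" and BC: "B \<inter> C = {}"
    and eq: "\<And>a. a \<in> A - S \<Longrightarrow> f' a = f a"
  shows "b \<in> B \<Longrightarrow> (walk_step f \<gamma> B ^^ t) b \<in> C \<Longrightarrow>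
     \<exists>t'. (walk_step f' \<gamma> {b\<in>B. \<gamma> b \<notin> S} ^^ t') b \<in> {b\<in>B. \<gamma> b \<in> S}"
proof (induction t arbitrary: b)
  case 0 then show ?case using BC by auto
next
  case (Suc t)
  show ?case
  proof (cases "\<gamma> b \<in> S")
    case True then show ?thesis using Suc.prems by (intro exI[of _ 0]) auto
  next
    case False
    have gb: "\<gamma> b \<in> A - S" using False Suc.prems g by auto
    have fb: "f (\<gamma> b) \<in> B" using gb f S by auto
    have st: "walk_step f \<gamma> B b = f (\<gamma> b)" using Suc.prems by (simp add: walk_step_def)
    have st': "walk_step f' \<gamma> {b\<in>B. \<gamma> b \<notin> S} b = f (\<gamma> b)"
      using Suc.prems False eq gb by (simp add: walk_step_def)
    from Suc.prems(2) have "(walk_step f \<gamma> B ^^ t) (f (\<gamma> b)) \<in> C"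
      by (simp only: funpow_Suc_apply st)
    from Suc.IH[OF fb this] obtain t' where
      "(walk_step f' \<gamma> {b\<in>B. \<gamma> b \<notin> S} ^^ t') (f (\<gamma> b)) \<in> {b\<in>B. \<gamma> b \<in> S}" by blast
    then show ?thesis
      by (intro exI[of _ "Suc t'"]) (simp only: funpow_Suc_apply st')
  qed
qed

lemma reach_extend_roots:
  assumes S: "\<And>a. a \<in> S \<Longrightarrow> f a \<in> C"
    and g: "\<gamma> ` B \<subseteq> A" and BC: "B \<inter> C = {}"
    and f'B: "\<And>a. a \<in> A - S \<Longrightarrow> f' a \<in> B"
    and eq: "\<And>a. a \<in> A - S \<Longrightarrow> f' a = f a"
  shows "b \<in> B \<Longrightarrow> (walk_step f' \<gamma> {b\<in>B. \<gamma> b \<notin> S} ^^ t) b \<in> {b\<in>B. \<gamma> b \<in> S} \<Longrightarrow>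
     \<exists>t'. (walk_step f \<gamma> B ^^ t') b \<in> C"
proof (induction t arbitrary: b)
  case 0
  then have "walk_step f \<gamma> B b \<in> C" using S by (simp add: walk_step_def)
  then show ?case by (intro exI[of _ 1]) simp
next
  case (Suc t)
  show ?case
  proof (cases "\<gamma> b \<in> S")
    case True
    then have "walk_step f \<gamma> B b \<in> C" using S Suc.prems by (simp add: walk_step_def)
    then show ?thesis by (intro exI[of _ 1]) simp
  next
    case False
    have gb: "\<gamma> b \<in> A - S" using False Suc.prems g by auto
    have st: "walk_step f \<gamma> B b = f (\<gamma> b)" using Suc.prems by (simp add: walk_step_def)
    have st': "walk_step f' \<gamma> {b\<in>B. \<gamma> b \<notin> S} b = f (\<gamma> b)"
      using Suc.prems False eq gb by (simp add: walk_step_def)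
    have fb: "f (\<gamma> b) \<in> B" using f'B[OF gb] eq[OF gb] by simp
    from Suc.prems(2) have "(walk_step f' \<gamma> {b\<in>B. \<gamma> b \<notin> S} ^^ t) (f (\<gamma> b)) \<in> {b\<in>B. \<gamma> b \<in> S}"
      by (simp only: funpow_Suc_apply st')
    from Suc.IH[OF fb this] obtain t' where "(walk_step f \<gamma> B ^^ t') (f (\<gamma> b)) \<in> C" by blast
    then show ?thesis by (intro exI[of _ "Suc t'"]) (simp only: funpow_Suc_apply st)
  qed
qed

lemma restrict_cycle_free_map:
  assumes f: "f \<in> cycle_free_maps A B C \<gamma>" and S: "S = {a\<in>A. f a \<in> C}"
    and BC: "B \<inter> C = {}" and g: "\<gamma> ` B \<subseteq> A"
  shows "restrict f (A - S) \<in> cycle_free_maps (A - S) {b\<in>B. \<gamma> b \<notin> S} {b\<in>B. \<gamma> b \<in> S} \<gamma>"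
proof -
  have fP: "f \<in> A \<rightarrow>\<^sub>E (B \<union> C)" using f by (simp add: cycle_free_maps_def)
  have "restrict f (A - S) \<in> (A - S) \<rightarrow>\<^sub>E ({b\<in>B. \<gamma> b \<notin> S} \<union> {b\<in>B. \<gamma> b \<in> S})"
    using fP S by auto
  moreover have "\<exists>t. (walk_step (restrict f (A - S)) \<gamma> {b\<in>B. \<gamma> b \<notin> S} ^^ t) b \<in> {b\<in>B. \<gamma> b \<in> S}"
    if b: "b \<in> {b\<in>B. \<gamma> b \<notin> S}" for b
  proof -
    obtain t where "(walk_step f \<gamma> B ^^ t) b \<in> C" using f b by (auto simp: cycle_free_maps_def)
    with reach_restrict_roots[OF fP S g BC, of "restrict f (A - S)"] b show ?thesis by auto
  qed
  ultimately show ?thesis by (simp add: cycle_free_maps_def)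
qed

lemma extend_cycle_free_map:
  assumes u: "u \<in> (\<Pi>\<^sub>E a\<in>S. C)" and v: "v \<in> cycle_free_maps (A - S) {b\<in>B. \<gamma> b \<notin> S} {b\<in>B. \<gamma> b \<in> S} \<gamma>"
    and BC: "B \<inter> C = {}" and g: "\<gamma> ` B \<subseteq> A" and SA: "S \<subseteq> A"
  defines "f \<equiv> \<lambda>a. if a \<in> S then u a else v a"
  shows "f \<in> cycle_free_maps A B C \<gamma>" "{a\<in>A. f a \<in> C} = S"
proof -
  have vP: "v \<in> (A - S) \<rightarrow>\<^sub>E ({b\<in>B. \<gamma> b \<notin> S} \<union> {b\<in>B. \<gamma> b \<in> S})"
    using v by (simp add: cycle_free_maps_def)
  have fS: "\<And>a. a \<in> S \<Longrightarrow> f a \<in> C" using u by (auto simp: f_def)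
  have vB: "\<And>a. a \<in> A - S \<Longrightarrow> v a \<in> B" using vP by auto
  have veq: "\<And>a. a \<in> A - S \<Longrightarrow> v a = f a" by (auto simp: f_def)
  have "\<exists>t. (walk_step f \<gamma> B ^^ t) b \<in> C" if b: "b \<in> B" for b
  proof -
    have "\<exists>t. (walk_step v \<gamma> {b\<in>B. \<gamma> b \<notin> S} ^^ t) b \<in> {b\<in>B. \<gamma> b \<in> S}"
    proof (cases "\<gamma> b \<in> S")
      case True then show ?thesis using b by (intro exI[of _ 0]) auto
    next
      case False then show ?thesis using v b by (auto simp: cycle_free_maps_def)
    qed
    then obtain t where "(walk_step v \<gamma> {b\<in>B. \<gamma> b \<notin> S} ^^ t) b \<in> {b\<in>B. \<gamma> b \<in> S}" by blast
    from reach_extend_roots[OF fS g BC vB veq b this] show ?thesis .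
  qed
  moreover have "f \<in> A \<rightarrow>\<^sub>E (B \<union> C)"
    using u vP SA unfolding f_def by (auto simp: PiE_def Pi_def extensional_def)
  ultimately show "f \<in> cycle_free_maps A B C \<gamma>" by (simp add: cycle_free_maps_def)
  show "{a\<in>A. f a \<in> C} = S"
  proof (intro set_eqI iffI)
    fix a assume a: "a \<in> {a\<in>A. f a \<in> C}"
    show "a \<in> S"
    proof (rule ccontr)
      assume "a \<notin> S"
      then have "f a \<in> B" using vB[of a] veq[of a] a by auto
      then show False using a BC by auto
    qed
  qed (use fS SA in auto)
qed

lemma cycle_free_maps_split_bij:
  assumes BC: "B \<inter> C = {}" and g: "\<gamma> ` B \<subseteq> A" and SA: "S \<subseteq> A"
  shows "bij_betw (\<lambda>f. (restrict f S, restrict f (A - S)))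
     {f \<in> cycle_free_maps A B C \<gamma>. {a\<in>A. f a \<in> C} = S}
     ((\<Pi>\<^sub>E a\<in>S. C) \<times> cycle_free_maps (A - S) {b\<in>B. \<gamma> b \<notin> S} {b\<in>B. \<gamma> b \<in> S} \<gamma>)"
proof (rule bij_betw_byWitness[where f' = "\<lambda>(u,v). (\<lambda>a. if a \<in> S then u a else v a)"])
  show "\<forall>f\<in>{f \<in> cycle_free_maps A B C \<gamma>. {a\<in>A. f a \<in> C} = S}.
      (\<lambda>(u,v). (\<lambda>a. if a \<in> S then u a else v a)) (restrict f S, restrict f (A - S)) = f"
    using SA by (auto simp: cycle_free_maps_def fun_eq_iff PiE_def extensional_def)
  show "\<forall>uv\<in>(\<Pi>\<^sub>E a\<in>S. C) \<times> cycle_free_maps (A - S) {b\<in>B. \<gamma> b \<notin> S} {b\<in>B. \<gamma> b \<in> S} \<gamma>.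
      (\<lambda>f. (restrict f S, restrict f (A - S))) ((\<lambda>(u,v). (\<lambda>a. if a \<in> S then u a else v a)) uv) = uv"
    by (auto simp: cycle_free_maps_def fun_eq_iff PiE_def extensional_def)
  show "(\<lambda>f. (restrict f S, restrict f (A - S))) ` {f \<in> cycle_free_maps A B C \<gamma>. {a\<in>A. f a \<in> C} = S}
      \<subseteq> (\<Pi>\<^sub>E a\<in>S. C) \<times> cycle_free_maps (A - S) {b\<in>B. \<gamma> b \<notin> S} {b\<in>B. \<gamma> b \<in> S} \<gamma>"
  proof (rule image_subsetI)
    fix f assume "f \<in> {f \<in> cycle_free_maps A B C \<gamma>. {a\<in>A. f a \<in> C} = S}"
    then have f: "f \<in> cycle_free_maps A B C \<gamma>" and S: "S = {a\<in>A. f a \<in> C}" by auto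
    have "restrict f S \<in> (\<Pi>\<^sub>E a\<in>S. C)" using S by auto
    then show "(restrict f S, restrict f (A - S)) \<in>
        (\<Pi>\<^sub>E a\<in>S. C) \<times> cycle_free_maps (A - S) {b\<in>B. \<gamma> b \<notin> S} {b\<in>B. \<gamma> b \<in> S} \<gamma>"
      using restrict_cycle_free_map[OF f S BC g] by simp
  qed
  show "(\<lambda>(u,v). (\<lambda>a. if a \<in> S then u a else v a)) `
      ((\<Pi>\<^sub>E a\<in>S. C) \<times> cycle_free_maps (A - S) {b\<in>B. \<gamma> b \<notin> S} {b\<in>B. \<gamma> b \<in> S} \<gamma>)
      \<subseteq> {f \<in> cycle_free_maps A B C \<gamma>. {a\<in>A. f a \<in> C} = S}"
  proof (rule image_subsetI)
    fix uv assume "uv \<in> (\<Pi>\<^sub>E a\<in>S. C) \<times> cycle_free_maps (A - S) {b\<in>B. \<gamma> b \<notin> S} {b\<in>B. \<gamma> b \<in> S} \<gamma>"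
    then obtain u v where "uv = (u, v)" and u: "u \<in> (\<Pi>\<^sub>E a\<in>S. C)"
      and v: "v \<in> cycle_free_maps (A - S) {b\<in>B. \<gamma> b \<notin> S} {b\<in>B. \<gamma> b \<in> S} \<gamma>" by blast
    then show "(\<lambda>(u,v). (\<lambda>a. if a \<in> S then u a else v a)) uv \<in> {f \<in> cycle_free_maps A B C \<gamma>. {a\<in>A. f a \<in> C} = S}"
      using extend_cycle_free_map[OF u v BC g SA] by simp
  qed
qed

lemma card_cycle_free_maps_with_roots:
  assumes "finite C" "B \<inter> C = {}" "\<gamma> ` B \<subseteq> A" "S \<subseteq> A" "finite S"
  shows "card {f \<in> cycle_free_maps A B C \<gamma>. {a\<in>A. f a \<in> C} = S}
    = card C ^ card S * card (cycle_free_maps (A - S) {b\<in>B. \<gamma> b \<notin> S} {b\<in>B. \<gamma> b \<in> S} \<gamma>)"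
  using bij_betw_same_card[OF cycle_free_maps_split_bij[OF assms(2-4)]] assms(5)
  by (simp add: card_cartesian_product card_PiE)

lemma sum_nonempty_subsets_by_card:
  fixes \<phi> :: "nat \<Rightarrow> nat"
  assumes "finite A"
  shows "(\<Sum>S\<in>{S. S \<subseteq> A \<and> S \<noteq> {}}. \<phi> (card S)) = (\<Sum>s\<in>{1..card A}. (card A choose s) * \<phi> s)"
proof -
  have eq: "{S. S \<subseteq> A \<and> S \<noteq> {}} = (\<Union>s\<in>{1..card A}. {S. S \<subseteq> A \<and> card S = s})"
    using assms by (auto simp: Suc_le_eq card_gt_0_iff card_mono finite_subset)
  have "(\<Sum>S\<in>{S. S \<subseteq> A \<and> S \<noteq> {}}. \<phi> (card S))
      = (\<Sum>s\<in>{1..card A}. \<Sum>S\<in>{S. S \<subseteq> A \<and> card S = s}. \<phi> (card S))"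
    unfolding eq using assms by (intro sum.UNION_disjoint) (auto intro: finite_subset[of _ "Pow A"])
  also have "\<dots> = (\<Sum>s\<in>{1..card A}. (card A choose s) * \<phi> s)"
    using n_subsets[OF assms] by (intro sum.cong) auto
  finally show ?thesis .
qed

lemma card_preimage_by_fibres:
  assumes "finite B" "\<forall>a\<in>A. card {b\<in>B. \<gamma> b = a} = x" "S \<subseteq> A" "finite S"
  shows "card {b\<in>B. \<gamma> b \<in> S} = x * card S"
proof -
  have "{b\<in>B. \<gamma> b \<in> S} = (\<Union>a\<in>S. {b\<in>B. \<gamma> b = a})" by auto
  moreover have "card (\<Union>a\<in>S. {b\<in>B. \<gamma> b = a}) = (\<Sum>a\<in>S. card {b\<in>B. \<gamma> b = a})"
    using assms by (intro card_UN_disjoint) auto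
  ultimately have "card {b\<in>B. \<gamma> b \<in> S} = (\<Sum>a\<in>S. card {b\<in>B. \<gamma> b = a})" by simp
  also have "\<dots> = (\<Sum>a\<in>S. x)" using assms by (intro sum.cong) auto
  finally show ?thesis by simp
qed

lemma sum_binomial_forest_identity:
  fixes c x p :: nat
  shows "(\<Sum>s\<in>{1..Suc p}. (Suc p choose s) * c^s * (if s = Suc p then 1 else x*s*(x*Suc p)^(Suc p-s-1)))
       = c*(c+x*Suc p)^p"
proof -
  define X where "X = x * Suc p"
  have trm: "(Suc p choose s) * c^s * (if s = Suc p then 1 else x*s*(x*Suc p)^(Suc p-s-1))
      = (p choose (s-1)) * c^s * X^(Suc p - s)" if "s \<in> {1..Suc p}" for s
  proof (cases "s = Suc p")
    case True then show ?thesis by simp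
  next
    case False
    with that have s: "1 \<le> s" "s \<le> p" by auto
    have e1: "s * (Suc p choose s) = Suc p * (p choose (s - 1))"
      using times_binomial_minus1_eq[of s "Suc p"] s by simp
    have "Suc p - s = Suc (Suc p - s - 1)" using s by simp
    then have e2: "X^(Suc p - s) = X * X^(Suc p - s - 1)"
      by (metis power_Suc)
    have "(Suc p choose s) * c^s * (x*s*(x*Suc p)^(Suc p-s-1))
        = (s * (Suc p choose s)) * c^s * x * X^(Suc p - s - 1)"
      by (simp add: X_def)
    also have "\<dots> = (p choose (s-1)) * c^s * X^(Suc p - s)"
      unfolding e1 e2 by (simp add: X_def algebra_simps)
    finally show ?thesis using False by simp
  qed
  have "(\<Sum>s\<in>{1..Suc p}. (Suc p choose s) * c^s * (if s = Suc p then 1 else x*s*(x*Suc p)^(Suc p-s-1)))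
      = (\<Sum>s\<in>{1..Suc p}. (p choose (s-1)) * c^s * X^(Suc p - s))"
    by (rule sum.cong) (auto simp: trm)
  also have "\<dots> = (\<Sum>j\<in>{0..p}. (p choose j) * c^(Suc j) * X^(p - j))"
  proof -
    have eq: "{1..Suc p} = Suc ` {0..p}" by auto
    show ?thesis unfolding eq by (subst sum.reindex) auto
  qed
  also have "\<dots> = c * (\<Sum>j\<le>p. (p choose j) * c^j * X^(p - j))"
    by (simp add: sum_distrib_left atLeast0AtMost algebra_simps)
  also have "\<dots> = c * (c + X)^p" by (simp add: binomial_ring)
  finally show ?thesis by (simp add: X_def)
qed

lemma card_cycle_free_maps_by_roots:
  assumes "finite A" "finite B" "finite C" "B \<inter> C = {}" "\<gamma> ` B \<subseteq> A" "A \<noteq> {}"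
  shows "card (cycle_free_maps A B C \<gamma>) = (\<Sum>S\<in>{S. S \<subseteq> A \<and> S \<noteq> {}}.
    card C ^ card S * card (cycle_free_maps (A - S) {b\<in>B. \<gamma> b \<notin> S} {b\<in>B. \<gamma> b \<in> S} \<gamma>))"
proof -
  define Fs where "Fs S = {f \<in> cycle_free_maps A B C \<gamma>. {a\<in>A. f a \<in> C} = S}" for S
  have cov: "cycle_free_maps A B C \<gamma> = (\<Union>S\<in>{S. S \<subseteq> A \<and> S \<noteq> {}}. Fs S)"
  proof (intro equalityI subsetI)
    fix f assume f: "f \<in> cycle_free_maps A B C \<gamma>"
    then have "{a\<in>A. f a \<in> C} \<noteq> {}"
      using cycle_free_map_has_root[OF f assms(4-6)] by blast
    then show "f \<in> (\<Union>S\<in>{S. S \<subseteq> A \<and> S \<noteq> {}}. Fs S)"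
      using f unfolding Fs_def by (intro UN_I[of "{a\<in>A. f a \<in> C}"]) auto
  qed (auto simp: Fs_def)
  have "card (cycle_free_maps A B C \<gamma>) = (\<Sum>S\<in>{S. S \<subseteq> A \<and> S \<noteq> {}}. card (Fs S))"
    unfolding cov
  proof (rule card_UN_disjoint)
    show "finite {S. S \<subseteq> A \<and> S \<noteq> {}}"
      using assms(1) by (auto intro: finite_subset[of _ "Pow A"])
    show "\<forall>S\<in>{S. S \<subseteq> A \<and> S \<noteq> {}}. finite (Fs S)"
      using finite_cycle_free_maps[OF assms(1-3)] by (auto simp: Fs_def)
  qed (auto simp: Fs_def)
  also have "\<dots> = (\<Sum>S\<in>{S. S \<subseteq> A \<and> S \<noteq> {}}.
      card C ^ card S * card (cycle_free_maps (A - S) {b\<in>B. \<gamma> b \<notin> S} {b\<in>B. \<gamma> b \<in> S} \<gamma>))"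
    using card_cycle_free_maps_with_roots[OF assms(3-5)] assms(1)
    by (intro sum.cong) (auto simp: Fs_def finite_subset)
  finally show ?thesis .
qed

theorem card_cycle_free_maps:
  assumes "finite A" "finite B" "finite C" "B \<inter> C = {}" "\<gamma> ` B \<subseteq> A"
    "\<forall>a\<in>A. card {b\<in>B. \<gamma> b = a} = x"
  shows "card (cycle_free_maps A B C \<gamma>) = (if A = {} then 1 else card C * (card C + x * card A)^(card A - 1))"
  using assms
proof (induction "card A" arbitrary: A B C rule: less_induct)
  case less
  show ?case
  proof (cases "A = {}")
    case True
    then have "B = {}" using less.prems by auto
    then have "cycle_free_maps A B C \<gamma> = {\<lambda>_. undefined}" using True by (auto simp: cycle_free_maps_def)
    then show ?thesis using True by simp
  next
    case False
    obtain p where np: "card A = Suc p" using False less.prems(1) by (cases "card A") auto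
    have rest: "card (cycle_free_maps (A - S) {b\<in>B. \<gamma> b \<notin> S} {b\<in>B. \<gamma> b \<in> S} \<gamma>) =
        (if card S = card A then 1 else x * card S * (x * card A)^(card A - card S - 1))"
      if S: "S \<subseteq> A" "S \<noteq> {}" for S
    proof -
      let ?B' = "{b\<in>B. \<gamma> b \<notin> S}" and ?C' = "{b\<in>B. \<gamma> b \<in> S}"
      have finS: "finite S" using S less.prems(1) finite_subset by blast
      have cS: "card S \<le> card A" "0 < card S" using card_mono[OF less.prems(1) S(1)] finS S(2) by auto
      have cAS: "card (A - S) = card A - card S" using finS S(1) by (simp add: card_Diff_subset)
      have fibres: "\<forall>a\<in>A - S. card {b \<in> ?B'. \<gamma> b = a} = x"
      proof
        fix a assume a: "a \<in> A - S"
        then have "{b \<in> ?B'. \<gamma> b = a} = {b\<in>B. \<gamma> b = a}" by auto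
        then show "card {b \<in> ?B'. \<gamma> b = a} = x" using a less.prems(6) by auto
      qed
      have "card (cycle_free_maps (A - S) ?B' ?C' \<gamma>) =
          (if A - S = {} then 1 else card ?C' * (card ?C' + x * card (A - S))^(card (A - S) - 1))"
        by (rule less.hyps) (use less.prems cS cAS fibres in auto)
      moreover have "card ?C' = x * card S" using card_preimage_by_fibres[OF less.prems(2,6) S(1) finS] .
      moreover have "(A - S = {}) = (card S = card A)"
        using S less.prems(1) card_subset_eq[of A S] by auto
      moreover have "x * card S + x * (card A - card S) = x * card A"
        using cS by (simp add: algebra_simps)
      ultimately show ?thesis unfolding cAS by simp
    qed
    have "card (cycle_free_maps A B C \<gamma>) = (\<Sum>S\<in>{S. S \<subseteq> A \<and> S \<noteq> {}}. (\<lambda>s. card C ^ s *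
        (if s = card A then 1 else x * s * (x * card A)^(card A - s - 1))) (card S))"
      unfolding card_cycle_free_maps_by_roots[OF less.prems(1-5) False] by (rule sum.cong) (auto simp: rest)
    also have "\<dots> = (\<Sum>s\<in>{1..card A}. (card A choose s) * (card C ^ s *
        (if s = card A then 1 else x * s * (x * card A)^(card A - s - 1))))"
      by (rule sum_nonempty_subsets_by_card[OF less.prems(1)])
    also have "\<dots> = card C * (card C + x * card A) ^ p"
      unfolding np using sum_binomial_forest_identity[of p "card C" x] by (simp add: algebra_simps)
    finally show ?thesis using False np by simp
  qed
qed

lemma cf_step_iter:
  assumes f: "f \<in> A \<rightarrow>\<^sub>E (Inl ` B \<union> Inr ` C)" and g: "\<gamma> ` B \<subseteq> A"
  shows "y \<in> Inl ` B \<union> Inr ` C \<Longrightarrow>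
    (cf_step f \<gamma> ^^ t) y = (walk_step f (\<gamma> \<circ> projl) (Inl ` B) ^^ t) y \<and>
    (walk_step f (\<gamma> \<circ> projl) (Inl ` B) ^^ t) y \<in> Inl ` B \<union> Inr ` C"
proof (induction t arbitrary: y)
  case 0 then show ?case by simp
next
  case (Suc t)
  have step: "cf_step f \<gamma> y = walk_step f (\<gamma> \<circ> projl) (Inl ` B) y \<and> walk_step f (\<gamma> \<circ> projl) (Inl ` B) y \<in> Inl ` B \<union> Inr ` C"
  proof (cases y)
    case (Inl b)
    then have b: "b \<in> B" using Suc.prems by auto
    then have "f (\<gamma> b) \<in> Inl ` B \<union> Inr ` C" using f g by auto
    then show ?thesis using Inl b by (simp add: walk_step_def)
  next
    case (Inr c)
    then show ?thesis using Suc.prems by (auto simp: walk_step_def)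
  qed
  show ?case using Suc.IH[of "walk_step f (\<gamma> \<circ> projl) (Inl ` B) y"] step
    by (simp only: funpow_Suc_apply)
qed

lemma cycle_free_funs_eq:
  fixes \<gamma> :: "'b \<Rightarrow> 'a" and B :: "'b set" and C :: "'c set"
  assumes g: "\<gamma> ` B \<subseteq> A"
  shows "cycle_free_funs A B C \<gamma> = cycle_free_maps A (Inl ` B) (Inr ` C) (\<gamma> \<circ> projl)"
proof (intro set_eqI iffI)
  fix f assume "f \<in> cycle_free_funs A B C \<gamma>"
  then have f: "f \<in> A \<rightarrow>\<^sub>E (Inl ` B \<union> Inr ` C)" and r: "\<forall>b\<in>B. \<exists>t c. (cf_step f \<gamma> ^^ t) (Inl b) = Inr c"
    by (auto simp: cycle_free_funs_def)
  have "\<forall>y\<in>(Inl ` B :: ('b + 'c) set). \<exists>t. (walk_step f (\<gamma> \<circ> projl) (Inl ` B) ^^ t) y \<in> Inr ` C"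
  proof
    fix y :: "'b + 'c" assume "y \<in> Inl ` B"
    then obtain b where b: "b \<in> B" "y = Inl b" by auto
    then obtain t c where tc: "(cf_step f \<gamma> ^^ t) (Inl b) = Inr c" using r by blast
    have "(walk_step f (\<gamma> \<circ> projl) (Inl ` B) ^^ t) y = Inr c \<and> Inr c \<in> Inl ` B \<union> Inr ` C"
      using cf_step_iter[OF f g, of y t] b tc by auto
    then show "\<exists>t. (walk_step f (\<gamma> \<circ> projl) (Inl ` B) ^^ t) y \<in> Inr ` C" by auto
  qed
  then show "f \<in> cycle_free_maps A (Inl ` B) (Inr ` C) (\<gamma> \<circ> projl)" using f by (simp add: cycle_free_maps_def)
next
  fix f assume "f \<in> cycle_free_maps A (Inl ` B) (Inr ` C) (\<gamma> \<circ> projl)"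
  then have f: "f \<in> A \<rightarrow>\<^sub>E (Inl ` B \<union> Inr ` C)"
    and r: "\<forall>y\<in>Inl ` B. \<exists>t. (walk_step f (\<gamma> \<circ> projl) (Inl ` B) ^^ t) y \<in> Inr ` C"
    by (auto simp: cycle_free_maps_def)
  have "\<forall>b\<in>B. \<exists>t c. (cf_step f \<gamma> ^^ t) (Inl b) = Inr c"
  proof
    fix b assume b: "b \<in> B"
    then obtain t where t: "(walk_step f (\<gamma> \<circ> projl) (Inl ` B) ^^ t) (Inl b) \<in> Inr ` C" using r by blast
    have "(cf_step f \<gamma> ^^ t) (Inl b) = (walk_step f (\<gamma> \<circ> projl) (Inl ` B) ^^ t) (Inl b)"
      using cf_step_iter[OF f g, of "Inl b" t] b by auto
    then show "\<exists>t c. (cf_step f \<gamma> ^^ t) (Inl b) = Inr c" using t by (metis imageE)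
  qed
  then show "f \<in> cycle_free_funs A B C \<gamma>" using f by (simp add: cycle_free_funs_def)
qed

lemma finite_cycle_free_funs:
  assumes "finite A" "finite B" "finite C" "\<gamma> ` B \<subseteq> A"
  shows "finite (cycle_free_funs A B C \<gamma>)"
  unfolding cycle_free_funs_eq[OF assms(4)] using assms(1-3) by (simp add: finite_cycle_free_maps)

theorem card_cycle_free_funs:
  fixes \<gamma> :: "'b \<Rightarrow> 'a" and B :: "'b set" and C :: "'c set"
  assumes "finite A" "finite B" "finite C" "\<gamma> ` B \<subseteq> A" "\<forall>a\<in>A. card {b\<in>B. \<gamma> b = a} = x"
  shows "card (cycle_free_funs A B C \<gamma>) =
    (if A = {} then 1 else card C * (card C + x * card A) ^ (card A - 1))"
proof -
  have fibre: "card {y \<in> Inl ` B. (\<gamma> \<circ> projl) y = a} = card {b\<in>B. \<gamma> b = a}" for a :: 'a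
  proof -
    have eq: "{y \<in> Inl ` B. (\<gamma> \<circ> projl) y = a} = Inl ` {b\<in>B. \<gamma> b = a}" by force
    show ?thesis unfolding eq by (rule card_image) (simp add: inj_on_def)
  qed
  have "card (cycle_free_funs A B C \<gamma>) = card (cycle_free_maps A (Inl ` B) (Inr ` C) (\<gamma> \<circ> projl))"
    by (simp only: cycle_free_funs_eq[OF assms(4)])
  also have "\<dots> = (if A = {} then 1 else card (Inr ` C :: ('b + 'c) set) *
      (card (Inr ` C :: ('b + 'c) set) + x * card A) ^ (card A - 1))"
  proof (rule card_cycle_free_maps)
    show "\<forall>a\<in>A. card {b \<in> Inl ` B. (\<gamma> \<circ> projl) b = a} = x"
      unfolding fibre using assms(5) .
  qed (use assms in auto)
  finally show ?thesis by (simp add: card_image)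
qed

section \<open>Copies of \<open>H\<close> on \<open>[k]\<close> through a fixed lap\<close>

definition relabel :: "('a \<Rightarrow> 'b) \<Rightarrow> 'a set set \<Rightarrow> 'b set set" where
  "relabel \<sigma> G = (\<lambda>L. \<sigma> ` L) ` G"

lemma relabel_comp: "relabel (\<sigma> \<circ> \<tau>) G = relabel \<sigma> (relabel \<tau> G)"
  by (auto simp: relabel_def image_comp)

lemma relabel_id: "relabel id G = G"
  by (auto simp: relabel_def)

lemma relabel_cong: "(\<And>x. x \<in> \<Union>G \<Longrightarrow> \<sigma> x = \<tau> x) \<Longrightarrow> relabel \<sigma> G = relabel \<tau> G"
proof -
  assume a: "\<And>x. x \<in> \<Union>G \<Longrightarrow> \<sigma> x = \<tau> x"
  have "\<And>L. L \<in> G \<Longrightarrow> \<sigma> ` L = \<tau> ` L"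
  proof -
    fix L assume "L \<in> G"
    then show "\<sigma> ` L = \<tau> ` L" by (intro image_cong[OF refl]) (use a in blast)
  qed
  then show ?thesis unfolding relabel_def by (auto intro: image_cong)
qed

lemma card_relabel:
  assumes "inj_on \<sigma> (\<Union>G)"
  shows "card (relabel \<sigma> G) = card G"
proof -
  have "inj_on (\<lambda>L. \<sigma> ` L) G"
  proof (rule inj_onI)
    fix L1 L2 assume "L1 \<in> G" "L2 \<in> G" "\<sigma> ` L1 = \<sigma> ` L2"
    then show "L1 = L2" using assms inj_on_image_eq_iff[of \<sigma> "\<Union>G" L1 L2] by auto
  qed
  then show ?thesis by (simp add: relabel_def card_image)
qed

lemma card_Aut_pos: "card (Aut k H) > 0"
proof -
  have "Aut k H \<subseteq> {\<sigma>. \<sigma> permutes {1..k}}" by (auto simp: Aut_def)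
  then have "finite (Aut k H)" by (rule finite_subset) (simp add: finite_permutations)
  moreover have "id \<in> Aut k H" by (simp add: Aut_def permutes_id)
  ultimately show ?thesis by (auto simp: card_gt_0_iff)
qed

context
  fixes k m :: nat and H :: "nat set set"
  assumes Hk: "rgraph m {1..k} H"
begin

definition "H_copies = {G. H_graph_on k H {1..k} G}"
definition "Perms = {\<sigma>. \<sigma> permutes {1..k}}"

lemma H_edge: "L \<in> H \<Longrightarrow> L \<subseteq> {1..k} \<and> card L = m"
  using Hk by (auto simp: rgraph_def)

lemma H_copies_iff: "G \<in> H_copies \<longleftrightarrow> (\<exists>\<sigma>\<in>Perms. G = relabel \<sigma> H)"
proof
  assume "G \<in> H_copies"
  then obtain \<sigma> where s: "bij_betw \<sigma> {1..k} {1..k}" "G = relabel \<sigma> H"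
    by (auto simp: H_copies_def H_graph_on_def relabel_def)
  define \<sigma>' where "\<sigma>' x = (if x \<in> {1..k} then \<sigma> x else x)" for x
  have "bij_betw \<sigma>' {1..k} {1..k}"
    using s(1) by (rule bij_betw_cong[THEN iffD1, rotated]) (simp add: \<sigma>'_def)
  then have "\<sigma>' permutes {1..k}" by (rule bij_imp_permutes) (auto simp: \<sigma>'_def)
  then have "\<sigma>' \<in> Perms" by (simp add: Perms_def)
  moreover have "relabel \<sigma>' H = relabel \<sigma> H"
  proof (rule relabel_cong)
    fix x assume "x \<in> \<Union>H"
    then have "x \<in> {1..k}" using H_edge by blast
    then show "\<sigma>' x = \<sigma> x" by (simp add: \<sigma>'_def)
  qed
  ultimately show "\<exists>\<sigma>\<in>Perms. G = relabel \<sigma> H" using s by auto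
next
  assume "\<exists>\<sigma>\<in>Perms. G = relabel \<sigma> H"
  then obtain \<sigma> where "\<sigma> permutes {1..k}" "G = relabel \<sigma> H" by (auto simp: Perms_def)
  then show "G \<in> H_copies"
    by (auto simp: H_copies_def H_graph_on_def relabel_def intro!: exI[of _ \<sigma>] permutes_imp_bij)
qed

lemma card_Perms: "card Perms = fact k"
  unfolding Perms_def by (rule card_permutations) auto

lemma finite_Perms: "finite Perms"
  unfolding Perms_def by (rule finite_permutations) auto

lemma Aut_eq_stabiliser: "Aut k H = {\<sigma>\<in>Perms. relabel \<sigma> H = H}"
  by (auto simp: Aut_def Perms_def relabel_def)

lemma card_relabel_fibre:
  assumes "\<sigma>0 \<in> Perms"
  shows "card {\<sigma>\<in>Perms. relabel \<sigma> H = relabel \<sigma>0 H} = card (Aut k H)"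
proof -
  have p0: "\<sigma>0 permutes {1..k}" using assms by (simp add: Perms_def)
  have "bij_betw (\<lambda>\<tau>. \<sigma>0 \<circ> \<tau>) (Aut k H) {\<sigma>\<in>Perms. relabel \<sigma> H = relabel \<sigma>0 H}"
  proof (rule bij_betw_byWitness[where f' = "\<lambda>\<sigma>. inv \<sigma>0 \<circ> \<sigma>"])
    show "\<forall>a\<in>Aut k H. inv \<sigma>0 \<circ> (\<sigma>0 \<circ> a) = a"
      by (simp only: o_assoc permutes_inv_o(2)[OF p0] id_o) simp
    show "\<forall>a'\<in>{\<sigma>\<in>Perms. relabel \<sigma> H = relabel \<sigma>0 H}. \<sigma>0 \<circ> (inv \<sigma>0 \<circ> a') = a'"
      by (simp only: o_assoc permutes_inv_o(1)[OF p0] id_o) simp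
    show "(\<lambda>\<tau>. \<sigma>0 \<circ> \<tau>) ` Aut k H \<subseteq> {\<sigma>\<in>Perms. relabel \<sigma> H = relabel \<sigma>0 H}"
      using p0 by (auto simp: Aut_eq_stabiliser Perms_def relabel_comp intro: permutes_compose)
    show "(\<lambda>\<sigma>. inv \<sigma>0 \<circ> \<sigma>) ` {\<sigma>\<in>Perms. relabel \<sigma> H = relabel \<sigma>0 H} \<subseteq> Aut k H"
    proof (rule image_subsetI)
      fix \<sigma> assume s: "\<sigma> \<in> {\<sigma>\<in>Perms. relabel \<sigma> H = relabel \<sigma>0 H}"
      have "relabel (inv \<sigma>0 \<circ> \<sigma>) H = relabel (inv \<sigma>0 \<circ> \<sigma>0) H"
        using s by (simp add: relabel_comp)
      also have "\<dots> = H" using permutes_inv_o(2)[OF p0] by (simp add: relabel_id)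
      finally show "inv \<sigma>0 \<circ> \<sigma> \<in> Aut k H"
        using s p0 by (auto simp: Aut_eq_stabiliser Perms_def intro: permutes_compose permutes_inv)
    qed
  qed
  then show ?thesis by (simp add: bij_betw_same_card)
qed

lemma finite_H_copies: "finite H_copies"
proof -
  have "H_copies = (\<lambda>\<sigma>. relabel \<sigma> H) ` Perms" using H_copies_iff by auto
  then show ?thesis using finite_Perms by simp
qed

lemma orbit_stabiliser_H_copies: "card H_copies * card (Aut k H) = fact k"
proof -
  have "Perms = (\<Union>G\<in>H_copies. {\<sigma>\<in>Perms. relabel \<sigma> H = G})" using H_copies_iff by auto
  moreover have "card (\<Union>G\<in>H_copies. {\<sigma>\<in>Perms. relabel \<sigma> H = G}) = (\<Sum>G\<in>H_copies. card {\<sigma>\<in>Perms. relabel \<sigma> H = G})"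
    using finite_H_copies finite_Perms by (intro card_UN_disjoint) auto
  ultimately have "card Perms = (\<Sum>G\<in>H_copies. card {\<sigma>\<in>Perms. relabel \<sigma> H = G})" by simp
  also have "\<dots> = (\<Sum>G\<in>H_copies. card (Aut k H))"
  proof (rule sum.cong[OF refl])
    fix G assume "G \<in> H_copies"
    then obtain \<sigma>0 where "\<sigma>0 \<in> Perms" "G = relabel \<sigma>0 H" using H_copies_iff by auto
    then show "card {\<sigma>\<in>Perms. relabel \<sigma> H = G} = card (Aut k H)" using card_relabel_fibre by auto
  qed
  finally show ?thesis using card_Perms by simp
qed

lemma finite_H: "finite H"
proof (rule finite_subset[of _ "Pow {1..k}"])
  show "H \<subseteq> Pow {1..k}" using H_edge by auto
qed simp

lemma finite_H_copy: "G \<in> H_copies \<Longrightarrow> finite G"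
  using H_copies_iff finite_H by (auto simp: relabel_def)

lemma H_copy_props: "G \<in> H_copies \<Longrightarrow> card G = card H \<and> (\<forall>L\<in>G. L \<subseteq> {1..k} \<and> card L = m)"
proof -
  assume "G \<in> H_copies"
  then obtain \<sigma> where s: "\<sigma> permutes {1..k}" "G = relabel \<sigma> H" using H_copies_iff Perms_def by auto
  have inj: "inj \<sigma>" using s(1) by (rule permutes_inj)
  have "card G = card H" using s card_relabel[of \<sigma> H] inj by (auto intro: inj_on_subset)
  moreover have "\<forall>L\<in>G. L \<subseteq> {1..k} \<and> card L = m"
  proof
    fix L assume "L \<in> G"
    then obtain L0 where L0: "L0 \<in> H" "L = \<sigma> ` L0" using s by (auto simp: relabel_def)
    have "\<sigma> ` L0 \<subseteq> \<sigma> ` {1..k}" using H_edge L0 by (intro image_mono) auto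
    then have "L \<subseteq> {1..k}" using L0 permutes_image[OF s(1)] by auto
    moreover have "card L = m" using L0 H_edge card_image[of \<sigma> L0] inj by (auto intro: inj_on_subset)
    ultimately show "L \<subseteq> {1..k} \<and> card L = m" by simp
  qed
  ultimately show ?thesis by simp
qed

lemma perm_onto_lap_exists:
  assumes "L \<subseteq> {1..k}" "card L = m"
  shows "\<exists>\<tau>\<in>Perms. \<tau> ` {1..m} = L"
proof -
  have mk: "m \<le> k" using assms card_mono[of "{1..k}" L] by auto
  obtain h1 where h1: "bij_betw h1 {1..m} L"
    using assms by (metis card_atLeastAtMost diff_Suc_1 finite_atLeastAtMost finite_same_card_bij finite_subset)
  have c2: "card ({1..k} - {1..m}) = card ({1..k} - L)"
    using assms mk by (simp add: card_Diff_subset finite_subset)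
  obtain h2 where h2: "bij_betw h2 ({1..k} - {1..m}) ({1..k} - L)"
    using c2 finite_same_card_bij by blast
  define \<tau> where "\<tau> x = (if x \<in> {1..m} then h1 x else if x \<in> {1..k} then h2 x else x)" for x
  have b1: "bij_betw \<tau> {1..m} L"
    using h1 by (rule bij_betw_cong[THEN iffD1, rotated]) (simp add: \<tau>_def)
  have b2: "bij_betw \<tau> ({1..k} - {1..m}) ({1..k} - L)"
    using h2 by (rule bij_betw_cong[THEN iffD1, rotated]) (simp add: \<tau>_def)
  have "bij_betw \<tau> ({1..m} \<union> ({1..k} - {1..m})) (L \<union> ({1..k} - L))"
    by (rule bij_betw_combine[OF b1 b2]) auto
  moreover have "{1..m} \<union> ({1..k} - {1..m}) = {1..k}" using mk by auto
  moreover have "L \<union> ({1..k} - L) = {1..k}" using assms by auto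
  ultimately have "bij_betw \<tau> {1..k} {1..k}" by simp
  then have "\<tau> permutes {1..k}" by (rule bij_imp_permutes) (use mk in \<open>auto simp: \<tau>_def\<close>)
  then have "\<tau> \<in> Perms" by (simp add: Perms_def)
  moreover have "\<tau> ` {1..m} = L" using b1 by (simp add: bij_betw_def)
  ultimately show ?thesis by blast
qed

lemma R_H_eq_H_copies: "R_H k m H = {G\<in>H_copies. {1..m} \<in> G}"
  by (simp add: R_H_def H_copies_def)

lemma relabel_H_copy: "G \<in> H_copies \<Longrightarrow> \<rho> \<in> Perms \<Longrightarrow> relabel \<rho> G \<in> H_copies"
proof -
  assume G: "G \<in> H_copies" and r: "\<rho> \<in> Perms"
  obtain \<sigma> where s: "\<sigma> \<in> Perms" "G = relabel \<sigma> H" using G H_copies_iff by auto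
  have "relabel \<rho> G = relabel (\<rho> \<circ> \<sigma>) H" using s by (simp add: relabel_comp)
  moreover have "\<rho> \<circ> \<sigma> \<in> Perms" using s r by (auto simp: Perms_def intro: permutes_compose)
  ultimately show ?thesis using H_copies_iff by blast
qed

lemma card_H_copies_containing:
  assumes "L \<subseteq> {1..k}" "card L = m"
  shows "card {G\<in>H_copies. L \<in> G} = card (R_H k m H)"
proof -
  obtain \<tau> where t: "\<tau> \<in> Perms" "\<tau> ` {1..m} = L" using perm_onto_lap_exists[OF assms] by blast
  have p: "\<tau> permutes {1..k}" using t by (simp add: Perms_def)
  have ti: "inv \<tau> \<in> Perms" using p by (simp add: Perms_def permutes_inv)
  have "bij_betw (relabel \<tau>) (R_H k m H) {G\<in>H_copies. L \<in> G}"
  proof (rule bij_betw_byWitness[where f' = "relabel (inv \<tau>)"])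
    show "\<forall>a\<in>R_H k m H. relabel (inv \<tau>) (relabel \<tau> a) = a"
    proof
      fix a
      have "relabel (inv \<tau>) (relabel \<tau> a) = relabel (inv \<tau> \<circ> \<tau>) a" by (simp only: relabel_comp)
      also have "\<dots> = a" by (simp only: permutes_inv_o(2)[OF p] relabel_id)
      finally show "relabel (inv \<tau>) (relabel \<tau> a) = a" .
    qed
    show "\<forall>a'\<in>{G\<in>H_copies. L \<in> G}. relabel \<tau> (relabel (inv \<tau>) a') = a'"
    proof
      fix a
      have "relabel \<tau> (relabel (inv \<tau>) a) = relabel (\<tau> \<circ> inv \<tau>) a" by (simp only: relabel_comp)
      also have "\<dots> = a" by (simp only: permutes_inv_o(1)[OF p] relabel_id)
      finally show "relabel \<tau> (relabel (inv \<tau>) a) = a" .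
    qed
    show "relabel \<tau> ` R_H k m H \<subseteq> {G\<in>H_copies. L \<in> G}"
    proof (rule image_subsetI)
      fix G assume "G \<in> R_H k m H"
      then have G: "G \<in> H_copies" "{1..m} \<in> G" by (auto simp: R_H_eq_H_copies)
      have "L \<in> relabel \<tau> G" using G(2) t(2) unfolding relabel_def by blast
      then show "relabel \<tau> G \<in> {G\<in>H_copies. L \<in> G}" using relabel_H_copy[OF G(1) t(1)] by simp
    qed
    show "relabel (inv \<tau>) ` {G\<in>H_copies. L \<in> G} \<subseteq> R_H k m H"
    proof (rule image_subsetI)
      fix G assume G: "G \<in> {G\<in>H_copies. L \<in> G}"
      have "inv \<tau> ` L = (inv \<tau> \<circ> \<tau>) ` {1..m}" by (simp add: t(2)[symmetric] image_comp)
      then have "inv \<tau> ` L = {1..m}" using permutes_inv_o(2)[OF p] by simp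
      moreover have "inv \<tau> ` L \<in> relabel (inv \<tau>) G" using G unfolding relabel_def by blast
      ultimately have "{1..m} \<in> relabel (inv \<tau>) G" by simp
      then show "relabel (inv \<tau>) G \<in> R_H k m H" using G relabel_H_copy[OF _ ti] by (simp add: R_H_eq_H_copies)
    qed
  qed
  then show ?thesis by (simp add: bij_betw_same_card)
qed

text \<open>Double counting of the pairs (copy, edge of the copy).\<close>

theorem card_R_H: "card (R_H k m H) * (k choose m) * card (Aut k H) = fact k * card H"
proof -
  define M where "M = {L. L \<subseteq> {1..k} \<and> card L = m}"
  define P where "P = {(G, L). G \<in> H_copies \<and> L \<in> G}"
  have finM: "finite M" unfolding M_def by (auto intro: finite_subset[of _ "Pow {1..k}"])
  have P1: "P = (SIGMA G:H_copies. G)" by (auto simp: P_def)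
  have "card P = (\<Sum>G\<in>H_copies. card G)" unfolding P1
    using finite_H_copies finite_H_copy by (subst card_SigmaI) auto
  also have "\<dots> = (\<Sum>G\<in>H_copies. card H)" using H_copy_props by (intro sum.cong) auto
  finally have cP1: "card P = card H_copies * card H" by simp
  have "bij_betw (\<lambda>(G,L). (L,G)) P (SIGMA L:M. {G\<in>H_copies. L \<in> G})"
    by (rule bij_betw_byWitness[where f'="\<lambda>(L,G). (G,L)"]) (use H_copy_props in \<open>auto simp: P_def M_def\<close>)
  then have "card P = card (SIGMA L:M. {G\<in>H_copies. L \<in> G})" by (rule bij_betw_same_card)
  also have "\<dots> = (\<Sum>L\<in>M. card {G\<in>H_copies. L \<in> G})"
    using finM finite_H_copies by (subst card_SigmaI) auto
  also have "\<dots> = (\<Sum>L\<in>M. card (R_H k m H))"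
    by (intro sum.cong) (auto simp: M_def card_H_copies_containing)
  also have "\<dots> = (k choose m) * card (R_H k m H)"
    using n_subsets[of "{1..k}" m] by (simp add: M_def)
  finally have e1: "card H_copies * card H = (k choose m) * card (R_H k m H)" using cP1 by simp
  have "fact k * card H = (card H_copies * card (Aut k H)) * card H" using orbit_stabiliser_H_copies by simp
  also have "\<dots> = (card H_copies * card H) * card (Aut k H)" by (simp only: ac_simps)
  also have "\<dots> = card (R_H k m H) * (k choose m) * card (Aut k H)" unfolding e1 by (simp only: ac_simps)
  finally show ?thesis by simp
qed


lemma real_card_R_H:
  assumes "m \<le> k"
  shows "real (card (R_H k m H)) = fact k * real (card H) / (real (k choose m) * real (card (Aut k H)))"
proof -
  have "real (card (R_H k m H)) * real (k choose m) * real (card (Aut k H)) = fact k * real (card H)"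
    using arg_cong[OF card_R_H, of real] by (simp add: of_nat_mult)
  moreover have "card (Aut k H) > 0" "k choose m > 0" using card_Aut_pos assms by auto
  ultimately show ?thesis by (simp add: field_simps)
qed

end

section \<open>Partitions into blocks of equal size\<close>

definition block_partitions :: "nat set \<Rightarrow> nat \<Rightarrow> nat set set set" where
  "block_partitions W d = {\<pi>. (\<forall>N\<in>\<pi>. N \<subseteq> W \<and> card N = d) \<and> \<Union>\<pi> = W \<and>
      (\<forall>N\<in>\<pi>. \<forall>N'\<in>\<pi>. N \<noteq> N' \<longrightarrow> N \<inter> N' = {})}"

lemma block_partitions_empty: "d \<ge> 1 \<Longrightarrow> block_partitions {} d = {{}}"
  by (auto simp: block_partitions_def)

lemma finite_block_partitions: "finite W \<Longrightarrow> finite (block_partitions W d)"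
  by (rule finite_subset[of _ "Pow (Pow W)"]) (auto simp: block_partitions_def)

lemma block_partitions_Diff:
  assumes p: "\<pi> \<in> block_partitions W d" and N: "N \<in> \<pi>"
  shows "\<pi> - {N} \<in> block_partitions (W - N) d"
proof -
  have blk: "\<forall>N'\<in>\<pi>. N' \<subseteq> W \<and> card N' = d" and un: "\<Union>\<pi> = W"
    and dj: "\<forall>N1\<in>\<pi>. \<forall>N2\<in>\<pi>. N1 \<noteq> N2 \<longrightarrow> N1 \<inter> N2 = {}"
    using p by (auto simp: block_partitions_def)
  have sub: "N' \<subseteq> W - N" if N': "N' \<in> \<pi> - {N}" for N'
  proof -
    have "N' \<inter> N = {}" using dj N' N by auto
    then show ?thesis using blk N' by auto
  qed
  have "\<Union>(\<pi> - {N}) = W - N"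
  proof
    show "\<Union>(\<pi> - {N}) \<subseteq> W - N" using sub by auto
    show "W - N \<subseteq> \<Union>(\<pi> - {N})" using un by auto
  qed
  then show ?thesis using sub blk dj unfolding block_partitions_def by auto
qed

lemma block_partitions_insert:
  assumes "\<pi> \<in> block_partitions (W - N) d" "N \<subseteq> W" "card N = d"
  shows "insert N \<pi> \<in> block_partitions W d"
  using assms by (auto simp: block_partitions_def)

lemma card_block_partition:
  assumes d: "d \<ge> 1" and fin: "finite W" and cW: "card W = e * d" and p: "\<pi> \<in> block_partitions W d"
  shows "card \<pi> = e"
proof -
  have blk: "\<forall>N\<in>\<pi>. N \<subseteq> W \<and> card N = d" and un: "\<Union>\<pi> = W"
    and dj: "\<forall>N\<in>\<pi>. \<forall>N'\<in>\<pi>. N \<noteq> N' \<longrightarrow> N \<inter> N' = {}" using p by (auto simp: block_partitions_def)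
  have finp: "finite \<pi>" using blk fin by (meson Pow_iff finite_Pow_iff finite_subset subsetI)
  have "card W = (\<Sum>N\<in>\<pi>. card N)"
    using un finp blk dj fin card_UN_disjoint[of \<pi> "\<lambda>x. x"] by (auto intro: finite_subset)
  also have "\<dots> = d * card \<pi>" using blk by simp
  finally show ?thesis using cW d by simp
qed

lemma block_partitions_decomp:
  assumes d: "d \<ge> 1" and w0: "w0 \<in> W" and fin: "finite W"
  shows "block_partitions W d = (\<Union>S\<in>{S. S \<subseteq> W - {w0} \<and> card S = d - 1}.
            insert (insert w0 S) ` block_partitions (W - insert w0 S) d)"
proof (intro equalityI subsetI)
  fix \<pi> assume p: "\<pi> \<in> block_partitions W d"
  then obtain N0 where N0: "N0 \<in> \<pi>" "w0 \<in> N0" using w0 by (auto simp: block_partitions_def)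
  have N0W: "N0 \<subseteq> W" "card N0 = d" using p N0 by (auto simp: block_partitions_def)
  define S where "S = N0 - {w0}"
  have S: "S \<subseteq> W - {w0}" "card S = d - 1" "insert w0 S = N0"
    using N0W N0 fin by (auto simp: S_def finite_subset)
  have "\<pi> = insert N0 (\<pi> - {N0})" using N0 by auto
  then show "\<pi> \<in> (\<Union>S\<in>{S. S \<subseteq> W - {w0} \<and> card S = d - 1}.
      insert (insert w0 S) ` block_partitions (W - insert w0 S) d)"
    using S block_partitions_Diff[OF p N0(1)] by blast
next
  fix \<pi> assume "\<pi> \<in> (\<Union>S\<in>{S. S \<subseteq> W - {w0} \<and> card S = d - 1}.
      insert (insert w0 S) ` block_partitions (W - insert w0 S) d)"
  then obtain S \<pi>' where S: "S \<subseteq> W - {w0}" "card S = d - 1"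
    and p': "\<pi>' \<in> block_partitions (W - insert w0 S) d" and pi: "\<pi> = insert (insert w0 S) \<pi>'" by auto
  have "finite S" "w0 \<notin> S" using S fin finite_subset by auto
  then have "card (insert w0 S) = d" using S d by simp
  then show "\<pi> \<in> block_partitions W d"
    unfolding pi using block_partitions_insert[OF p'] S w0 by auto
qed

lemma insert_block_image_disjoint:
  assumes "insert w0 S \<noteq> insert w0 S'"
  shows "insert (insert w0 S) ` block_partitions (W - insert w0 S) d
    \<inter> insert (insert w0 S') ` block_partitions (W - insert w0 S') d = {}"
proof (rule ccontr)
  assume "\<not> ?thesis"
  then obtain p1 p2 where p: "p1 \<in> block_partitions (W - insert w0 S) d" "p2 \<in> block_partitions (W - insert w0 S') d"
    "insert (insert w0 S) p1 = insert (insert w0 S') p2" by auto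
  then have "insert w0 S \<in> p2" using assms by blast
  then have "insert w0 S \<subseteq> W - insert w0 S'" using p(2) by (auto simp: block_partitions_def)
  then show False by auto
qed

lemma card_insert_block_image:
  assumes "N \<noteq> {}"
  shows "card (insert N ` block_partitions (W - N) d) = card (block_partitions (W - N) d)"
proof (rule card_image, rule inj_onI)
  fix p1 p2 assume p: "p1 \<in> block_partitions (W - N) d" "p2 \<in> block_partitions (W - N) d"
    "insert N p1 = insert N p2"
  have "N \<notin> p1" "N \<notin> p2" using p(1,2) assms by (auto simp: block_partitions_def)
  then show "p1 = p2" using p(3) insert_ident by metis
qed

theorem card_block_partitions:
  assumes d: "d \<ge> 1"
  shows "finite W \<Longrightarrow> card W = e * d \<Longrightarrow>
    card (block_partitions W d) = (\<Prod>j\<in>{1..e}. (j * d - 1) choose (d - 1))"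
proof (induction e arbitrary: W)
  case 0
  then have "W = {}" by simp
  then show ?case using block_partitions_empty[OF d] by simp
next
  case (Suc e)
  have "W \<noteq> {}" using Suc.prems(2) d by auto
  then obtain w0 where w0: "w0 \<in> W" by auto
  let ?SS = "{S. S \<subseteq> W - {w0} \<and> card S = d - 1}"
  have rest: "card (block_partitions (W - insert w0 S) d) = (\<Prod>j\<in>{1..e}. (j * d - 1) choose (d - 1))"
    if S: "S \<in> ?SS" for S
  proof -
    have "finite S" "w0 \<notin> S" using S Suc.prems(1) finite_subset by auto
    then have "insert w0 S \<subseteq> W" "card (insert w0 S) = d" "finite (insert w0 S)"
      using S w0 d by auto
    then have "card (W - insert w0 S) = e * d"
      using Suc.prems(2) by (simp add: card_Diff_subset)
    then show ?thesis using Suc.IH Suc.prems(1) by simp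
  qed
  have "card (block_partitions W d)
      = (\<Sum>S\<in>?SS. card (insert (insert w0 S) ` block_partitions (W - insert w0 S) d))"
    unfolding block_partitions_decomp[OF d w0 Suc.prems(1)]
  proof (rule card_UN_disjoint)
    show "finite ?SS" using Suc.prems(1) by (auto intro: finite_subset[of _ "Pow W"])
    show "\<forall>S\<in>?SS. finite (insert (insert w0 S) ` block_partitions (W - insert w0 S) d)"
      using Suc.prems(1) by (simp add: finite_block_partitions)
    show "\<forall>S\<in>?SS. \<forall>S'\<in>?SS. S \<noteq> S' \<longrightarrow>
      insert (insert w0 S) ` block_partitions (W - insert w0 S) d
        \<inter> insert (insert w0 S') ` block_partitions (W - insert w0 S') d = {}"
      by (intro ballI impI insert_block_image_disjoint) auto
  qed
  also have "\<dots> = card ?SS * (\<Prod>j\<in>{1..e}. (j * d - 1) choose (d - 1))"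
    using rest by (simp add: card_insert_block_image)
  also have "card ?SS = (Suc e * d - 1) choose (d - 1)"
    using n_subsets[of "W - {w0}" "d - 1"] Suc.prems w0 by simp
  finally show ?case by (simp add: mult.commute)
qed

lemma prod_binomial_reverse:
  "(\<Prod>i=1..e. ((dd * (e - i + 1) - 1) choose (dd - 1))) = (\<Prod>j\<in>{1..e}. (j * dd - 1) choose (dd - 1))"
proof -
  have "(\<Prod>i=1..e. ((dd * (e - i + 1) - 1) choose (dd - 1))) =
      (\<Prod>i=1..e. ((dd * (e - (e + 1 - i) + 1) - 1) choose (dd - 1)))"
    by (subst prod.atLeastAtMost_rev) simp
  also have "\<dots> = (\<Prod>j\<in>{1..e}. (j * dd - 1) choose (dd - 1))"
    by (rule prod.cong) (auto simp: mult.commute)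
  finally show ?thesis .
qed

lemma prod_binomial_fact:
  fixes d :: nat
  assumes d: "d \<ge> 1"
  shows "(\<Prod>j\<in>{1..e}. (j*d - 1) choose (d - 1)) * fact e * (fact d)^e = (fact (e*d) :: nat)"
proof (induction e)
  case 0 then show ?case by simp
next
  case (Suc e)
  obtain d' where d': "d = Suc d'" using d by (cases d) auto
  define N' where "N' = e * d + d'"
  have c: "fact d' * fact (e*d) * ((N') choose d') = (fact N' :: nat)"
    using binomial_fact_lemma[of d' N'] by (simp add: N'_def)
  have fd: "(fact d :: nat) = d * fact d'" using d' by simp
  have sN: "Suc e * d - 1 = N'" using d' by (simp add: N'_def)
  have f_cases: "(fact (Suc e * d) :: nat) = Suc e * d * fact N'"
  proof -
    have "Suc e * d = Suc N'" using d' by (simp add: N'_def)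
    then show ?thesis by (simp add: fact_Suc)
  qed
  have "(\<Prod>j\<in>{1..Suc e}. (j*d - 1) choose (d - 1)) * fact (Suc e) * (fact d)^(Suc e)
      = ((\<Prod>j\<in>{1..e}. (j*d - 1) choose (d - 1)) * fact e * (fact d)^e) * ((N' choose d') * Suc e * fact d)"
    using sN d' by (simp add: algebra_simps)
  also have "\<dots> = fact (e*d) * ((N' choose d') * Suc e * (d * fact d'))" using Suc.IH fd by simp
  also have "\<dots> = Suc e * d * (fact d' * fact (e*d) * (N' choose d'))" by (simp add: algebra_simps)
  also have "\<dots> = fact (Suc e * d)" using c f_cases by simp
  finally show ?case .
qed

section \<open>Edge orders of \<open>(k, m)\<close>-trees\<close>

definition valid_order :: "nat \<Rightarrow> nat set list \<Rightarrow> bool" where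
  "valid_order m Es = (\<forall>i. 1 \<le> i \<and> i < length Es \<longrightarrow>
     (\<exists>j<i. card (Es ! i \<inter> Es ! j) = m \<and> (Es ! i - Es ! j) \<inter> \<Union>(set (take i Es)) = {}))"

lemma valid_order_butlast: "valid_order m (xs @ [x]) \<Longrightarrow> valid_order m xs"
  unfolding valid_order_def
proof (intro allI impI)
  fix i assume v: "\<forall>i. 1 \<le> i \<and> i < length (xs @ [x]) \<longrightarrow>
     (\<exists>j<i. card ((xs @ [x]) ! i \<inter> (xs @ [x]) ! j) = m \<and>
        ((xs @ [x]) ! i - (xs @ [x]) ! j) \<inter> \<Union>(set (take i (xs @ [x]))) = {})"
    and i: "1 \<le> i \<and> i < length xs"
  then obtain j where j: "j < i" "card ((xs @ [x]) ! i \<inter> (xs @ [x]) ! j) = m"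
    "((xs @ [x]) ! i - (xs @ [x]) ! j) \<inter> \<Union>(set (take i (xs @ [x]))) = {}" by fastforce
  then show "\<exists>j<i. card (xs ! i \<inter> xs ! j) = m \<and> (xs ! i - xs ! j) \<inter> \<Union>(set (take i xs)) = {}"
    using i by (intro exI[of _ j]) (auto simp: nth_append)
qed

lemma valid_order_last:
  assumes "valid_order m (xs @ [x])" "xs \<noteq> []"
  shows "\<exists>j<length xs. card (x \<inter> xs ! j) = m \<and> (x - xs ! j) \<inter> \<Union>(set xs) = {}"
proof -
  have l: "1 \<le> length xs \<and> length xs < length (xs @ [x])" using assms(2) by (cases xs) auto
  have "\<exists>j<length xs. card ((xs @ [x]) ! length xs \<inter> (xs @ [x]) ! j) = m \<and>
      ((xs @ [x]) ! length xs - (xs @ [x]) ! j) \<inter> \<Union>(set (take (length xs) (xs @ [x]))) = {}"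
    using assms(1) l unfolding valid_order_def by blast
  then obtain j where j: "j < length xs" "card ((xs @ [x]) ! length xs \<inter> (xs @ [x]) ! j) = m"
      "((xs @ [x]) ! length xs - (xs @ [x]) ! j) \<inter> \<Union>(set (take (length xs) (xs @ [x]))) = {}"
    by blast
  have e1: "(xs @ [x]) ! length xs = x" by simp
  have e2: "(xs @ [x]) ! j = xs ! j" using j(1) by (simp add: nth_append)
  have e3: "take (length xs) (xs @ [x]) = xs" by simp
  show ?thesis using j unfolding e1 e2 e3 by blast
qed

lemma valid_order_snoc:
  assumes "valid_order m xs" "j < length xs" "card (x \<inter> xs ! j) = m" "(x - xs ! j) \<inter> \<Union>(set xs) = {}"
  shows "valid_order m (xs @ [x])"
  unfolding valid_order_def
proof (intro allI impI)
  fix i assume i: "1 \<le> i \<and> i < length (xs @ [x])"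
  show "\<exists>j<i. card ((xs @ [x]) ! i \<inter> (xs @ [x]) ! j) = m \<and>
        ((xs @ [x]) ! i - (xs @ [x]) ! j) \<inter> \<Union>(set (take i (xs @ [x]))) = {}"
  proof (cases "i < length xs")
    case True
    then obtain j' where "j' < i" "card (xs ! i \<inter> xs ! j') = m" "(xs ! i - xs ! j') \<inter> \<Union>(set (take i xs)) = {}"
      using assms(1) i unfolding valid_order_def by blast
    then show ?thesis using True by (intro exI[of _ j']) (auto simp: nth_append)
  next
    case False
    then have "i = length xs" using i by simp
    then show ?thesis using assms by (intro exI[of _ j]) (auto simp: nth_append)
  qed
qed

lemma valid_order_Cons:
  assumes v: "valid_order m xs" and ne: "xs \<noteq> []" and c: "card (xs ! 0 \<inter> x) = m"
    and sub: "\<And>A. A \<in> set xs \<Longrightarrow> A \<inter> x \<subseteq> xs ! 0"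
  shows "valid_order m (x # xs)"
  unfolding valid_order_def
proof (intro allI impI)
  fix i assume i: "1 \<le> i \<and> i < length (x # xs)"
  show "\<exists>j<i. card ((x # xs) ! i \<inter> (x # xs) ! j) = m \<and>
        ((x # xs) ! i - (x # xs) ! j) \<inter> \<Union>(set (take i (x # xs))) = {}"
  proof (cases "i = 1")
    case True
    then show ?thesis using c ne by (intro exI[of _ 0]) (auto simp: hd_conv_nth[symmetric] take_Suc)
  next
    case False
    then obtain i' where i': "i = Suc i'" "1 \<le> i'" "i' < length xs" using i by (cases i) auto
    then obtain j' where j': "j' < i'" "card (xs ! i' \<inter> xs ! j') = m" "(xs ! i' - xs ! j') \<inter> \<Union>(set (take i' xs)) = {}"
      using v unfolding valid_order_def by blast
    have x0: "xs ! 0 \<in> set (take i' xs)" using i' ne by (auto simp: in_set_conv_nth intro!: exI[of _ 0])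
    have "(xs ! i' - xs ! j') \<inter> x \<subseteq> (xs ! i' - xs ! j') \<inter> xs ! 0"
      using sub[of "xs ! i'"] i' by auto
    also have "\<dots> \<subseteq> (xs ! i' - xs ! j') \<inter> \<Union>(set (take i' xs))" using x0 by auto
    finally have "(xs ! i' - xs ! j') \<inter> x = {}" using j'(3) by auto
    then show ?thesis using j' i' by (intro exI[of _ "Suc j'"]) auto
  qed
qed

lemma valid_order_reroot:
  "valid_order m Es \<Longrightarrow> distinct Es \<Longrightarrow> E \<in> set Es \<Longrightarrow>
   \<exists>Es'. valid_order m Es' \<and> distinct Es' \<and> set Es' = set Es \<and> Es' \<noteq> [] \<and> Es' ! 0 = E"
proof (induction Es arbitrary: E rule: rev_induct)
  case Nil then show ?case by simp
next
  case (snoc x xs)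
  have vx: "valid_order m xs" using valid_order_butlast snoc.prems(1) by blast
  have dx: "distinct xs" "x \<notin> set xs" using snoc.prems(2) by auto
  show ?case
  proof (cases "E \<in> set xs")
    case True
    obtain xs' where xs': "valid_order m xs'" "distinct xs'" "set xs' = set xs" "xs' \<noteq> []" "xs' ! 0 = E"
      using snoc.IH[OF vx dx(1) True] by blast
    have ne: "xs \<noteq> []" using True by auto
    obtain j0 where j0: "j0 < length xs" "card (x \<inter> xs ! j0) = m" "(x - xs ! j0) \<inter> \<Union>(set xs) = {}"
      using valid_order_last[OF snoc.prems(1) ne] by blast
    have "xs ! j0 \<in> set xs'" using j0 xs' by auto
    then obtain j' where j': "j' < length xs'" "xs' ! j' = xs ! j0" by (auto simp: in_set_conv_nth)
    have "valid_order m (xs' @ [x])" by (rule valid_order_snoc[OF xs'(1) j'(1)]) (use j0 j' xs' in auto)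
    then show ?thesis using xs' dx by (intro exI[of _ "xs' @ [x]"]) (auto simp: nth_append)
  next
    case False
    then have Ex: "E = x" using snoc.prems(3) by simp
    show ?thesis
    proof (cases "xs = []")
      case True
      then show ?thesis using Ex by (intro exI[of _ "[x]"]) (auto simp: valid_order_def)
    next
      case ne: False
      obtain j0 where j0: "j0 < length xs" "card (x \<inter> xs ! j0) = m" "(x - xs ! j0) \<inter> \<Union>(set xs) = {}"
        using valid_order_last[OF snoc.prems(1) ne] by blast
      have mem: "xs ! j0 \<in> set xs" using j0(1) by simp
      obtain xs' where xs': "valid_order m xs'" "distinct xs'" "set xs' = set xs" "xs' \<noteq> []" "xs' ! 0 = xs ! j0"
        using snoc.IH[OF vx dx(1) mem] by blast
      have "valid_order m (x # xs')"
      proof (rule valid_order_Cons[OF xs'(1) xs'(4)])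
        show "card (xs' ! 0 \<inter> x) = m" using j0 xs' by (simp add: Int_commute)
        show "\<And>A. A \<in> set xs' \<Longrightarrow> A \<inter> x \<subseteq> xs' ! 0" using j0(3) xs'(3,5) by blast
      qed
      then show ?thesis using xs' dx Ex by (intro exI[of _ "x # xs'"]) auto
    qed
  qed
qed

lemma km_tree_valid_order:
  "km_tree k m n T \<longleftrightarrow> T \<noteq> {} \<and> rgraph k {1..n} T \<and> \<Union>T = {1..n} \<and>
     (\<exists>Es. distinct Es \<and> set Es = T \<and> valid_order m Es)"
  by (simp add: km_tree_def valid_order_def)

section \<open>Codes of rooted built trees\<close>

text \<open>It transports an element of \<^const>\<open>R_H\<close> to an
  \<open>H\<close>-graph on the edge \<open>P \<union> N\<close> attached along the lap \<open>P\<close>, and back.\<close>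

definition ordered_labelling :: "nat \<Rightarrow> nat set \<Rightarrow> nat set \<Rightarrow> nat \<Rightarrow> nat" where
  "ordered_labelling m P N j = (if j \<le> m then sorted_list_of_set P ! (j - 1) else sorted_list_of_set N ! (j - m - 1))"

lemma bij_betw_shift: "bij_betw (\<lambda>j. j - Suc a) {Suc a..a + b} {..<b}"
  by (rule bij_betw_byWitness[where f'="\<lambda>i. i + Suc a"]) auto

lemma ordered_labelling_bij:
  assumes "finite P" "finite N" "card P = m" "card N = d" "P \<inter> N = {}"
  shows "bij_betw (ordered_labelling m P N) {1..m+d} (P \<union> N)" "ordered_labelling m P N ` {1..m} = P"
proof -
  let ?xs = "sorted_list_of_set P" and ?ys = "sorted_list_of_set N"
  have bx: "bij_betw ((!) ?xs) {..<m} P"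
    by (rule bij_betw_nth) (use assms in auto)
  have by': "bij_betw ((!) ?ys) {..<d} N"
    by (rule bij_betw_nth) (use assms in auto)
  have s1: "bij_betw (\<lambda>j. j - Suc 0) {Suc 0..0 + m} {..<m}" by (rule bij_betw_shift)
  have s2: "bij_betw (\<lambda>j. j - Suc m) {Suc m..m + d} {..<d}" by (rule bij_betw_shift)
  have b1: "bij_betw (ordered_labelling m P N) {1..m} P"
  proof -
    have "bij_betw ((!) ?xs \<circ> (\<lambda>j. j - Suc 0)) {1..m} P"
      using bij_betw_trans[OF s1 bx] by simp
    then show ?thesis by (rule bij_betw_cong[THEN iffD1, rotated]) (auto simp: ordered_labelling_def)
  qed
  have b2: "bij_betw (ordered_labelling m P N) {Suc m..m+d} N"
  proof -
    have "bij_betw ((!) ?ys \<circ> (\<lambda>j. j - Suc m)) {Suc m..m+d} N"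
      using bij_betw_trans[OF s2 by'] by simp
    then show ?thesis by (rule bij_betw_cong[THEN iffD1, rotated]) (auto simp: ordered_labelling_def)
  qed
  have "bij_betw (ordered_labelling m P N) ({1..m} \<union> {Suc m..m+d}) (P \<union> N)"
    by (rule bij_betw_combine[OF b1 b2 assms(5)])
  moreover have "{1..m} \<union> {Suc m..m+d} = {1..m+d}" by auto
  ultimately show "bij_betw (ordered_labelling m P N) {1..m+d} (P \<union> N)" by simp
  show "ordered_labelling m P N ` {1..m} = P" using b1 by (simp add: bij_betw_def)
qed

locale tree_count =
  fixes k m :: nat and H :: "nat set set" and e :: nat
  assumes mk: "m \<le> k - 1" and k1: "1 \<le> k" and e1: "1 \<le> e" and Hk: "rgraph m {1..k} H"
begin

abbreviation "d \<equiv> k - m"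
abbreviation "n \<equiv> e * (k - m) + m"
abbreviation "R \<equiv> {1..m}"
abbreviation "W \<equiv> {m+1..e * (k - m) + m}"

lemma d1: "d \<ge> 1" using mk k1 by auto
lemma kmd: "k = m + d" using mk k1 by auto

text \<open>A code \<open>(\<pi>, g, f)\<close> of a built tree: \<open>\<pi>\<close> partitions \<open>W\<close> into the blocks: each is an edge
  minus the lap along which that edge is attached; \<open>g N \<in> R_H\<close> is the \<open>H\<close>-graph of the edge of \<open>N\<close> in the coordinates of
  \<^const>\<open>ordered_labelling\<close>; and \<open>f N\<close> is \<^const>\<open>None\<close> if that edge is attached along the root
  lap \<open>R\<close>, and \<open>Some (N', L)\<close> if it is attached along the edge \<open>L \<noteq> R\<close> of \<open>g N'\<close>. Every block
  offers \<open>l - 1\<close> such laps, and following \<open>f\<close> must end at the root: \<open>f\<close> is a cycle-free map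
  exactly as in \<open>Z\<close>.\<close>

definition lap_choices :: "nat set set \<Rightarrow> (nat set \<Rightarrow> nat set set) \<Rightarrow> (nat set \<times> nat set) option set" where
  "lap_choices \<pi> g = Some ` (SIGMA N:\<pi>. g N - {R})"

definition lap_owner :: "(nat set \<times> nat set) option \<Rightarrow> nat set" where
  "lap_owner x = fst (the x)"

definition codes where
  "codes = (SIGMA \<pi>:block_partitions W d. SIGMA g:(\<pi> \<rightarrow>\<^sub>E R_H k m H). cycle_free_maps \<pi> (lap_choices \<pi> g) {None} lap_owner)"

definition lbl :: "nat set \<Rightarrow> nat set \<Rightarrow> nat \<Rightarrow> nat" where
  "lbl P N = ordered_labelling m P N"

definition unlbl :: "nat set \<Rightarrow> nat set \<Rightarrow> nat \<Rightarrow> nat" where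
  "unlbl P N = the_inv_into {1..k} (lbl P N)"

definition depth :: "nat set set \<Rightarrow> (nat set \<Rightarrow> nat set set) \<Rightarrow> (nat set \<Rightarrow> (nat set \<times> nat set) option) \<Rightarrow> nat set \<Rightarrow> nat" where
  "depth \<pi> g f N = (LEAST t. (walk_step f lap_owner (lap_choices \<pi> g) ^^ t) (f N) = None)"

text \<open>The lap of a block, in vertex coordinates, is found by following \<open>f\<close> to the root;
  \<open>depth + 1\<close> recursion steps suffice.\<close>

primrec lap_iter :: "(nat set \<Rightarrow> (nat set \<times> nat set) option) \<Rightarrow> nat \<Rightarrow> nat set \<Rightarrow> nat set" where
  "lap_iter f 0 N = R"
| "lap_iter f (Suc s) N = (case f N of None \<Rightarrow> R | Some (N', L) \<Rightarrow> lbl (lap_iter f s N') N' ` L)"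

definition attach_lap where "attach_lap \<pi> g f N = lap_iter f (Suc (depth \<pi> g f N)) N"
definition block_edge where "block_edge \<pi> g f N = attach_lap \<pi> g f N \<union> N"
definition block_graph where "block_graph \<pi> g f N = relabel (lbl (attach_lap \<pi> g f N) N) (g N)"
definition decode where
  "decode \<pi> g f = (block_edge \<pi> g f ` \<pi>,
     \<lambda>E. if E \<in> block_edge \<pi> g f ` \<pi> then block_graph \<pi> g f (THE N. N \<in> \<pi> \<and> block_edge \<pi> g f N = E) else {})"

definition built_trees where
  "built_trees = {(T, Hs). H_built_tree k m H n T Hs \<and> card T = e \<and> rooted_at T Hs R}"

lemma lbl_bij:
  assumes "finite P" "finite N" "card P = m" "card N = d" "P \<inter> N = {}"
  shows "bij_betw (lbl P N) {1..k} (P \<union> N)" "lbl P N ` R = P"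
  using ordered_labelling_bij[OF assms] kmd by (simp_all add: lbl_def)

lemma unlbl_lbl:
  assumes "finite P" "finite N" "card P = m" "card N = d" "P \<inter> N = {}"
  shows "bij_betw (unlbl P N) (P \<union> N) {1..k}"
    "\<And>j. j \<in> {1..k} \<Longrightarrow> unlbl P N (lbl P N j) = j"
    "\<And>x. x \<in> P \<union> N \<Longrightarrow> lbl P N (unlbl P N x) = x"
proof -
  have b: "bij_betw (lbl P N) {1..k} (P \<union> N)" by (rule lbl_bij[OF assms])
  show "bij_betw (unlbl P N) (P \<union> N) {1..k}" unfolding unlbl_def by (rule bij_betw_the_inv_into[OF b])
  show "\<And>j. j \<in> {1..k} \<Longrightarrow> unlbl P N (lbl P N j) = j"
    unfolding unlbl_def using b by (intro the_inv_into_f_f) (auto simp: bij_betw_def)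
  show "\<And>x. x \<in> P \<union> N \<Longrightarrow> lbl P N (unlbl P N x) = x"
    unfolding unlbl_def using b by (intro f_the_inv_into_f_bij_betw) auto
qed

lemma R_H_props:
  assumes "G \<in> R_H k m H"
  shows "R \<in> G" "\<And>L. L \<in> G \<Longrightarrow> L \<subseteq> {1..k} \<and> card L = m" "card G = card H"
    "\<exists>\<sigma>. bij_betw \<sigma> {1..k} {1..k} \<and> G = relabel \<sigma> H"
proof -
  have o: "G \<in> H_copies k H" using assms by (simp add: R_H_def H_copies_def[OF Hk])
  show "R \<in> G" using assms by (simp add: R_H_def)
  show "\<And>L. L \<in> G \<Longrightarrow> L \<subseteq> {1..k} \<and> card L = m" using H_copy_props[OF Hk o] by auto
  show "card G = card H" using H_copy_props[OF Hk o] by auto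
  show "\<exists>\<sigma>. bij_betw \<sigma> {1..k} {1..k} \<and> G = relabel \<sigma> H"
    using assms by (auto simp: R_H_def H_graph_on_def relabel_def)
qed

end

locale tree_code = tree_count +
  fixes \<pi> :: "nat set set" and g :: "nat set \<Rightarrow> nat set set"
    and f :: "nat set \<Rightarrow> (nat set \<times> nat set) option"
  assumes in_codes: "(\<pi>, g, f) \<in> codes"
begin

abbreviation "choices \<equiv> lap_choices \<pi> g"
abbreviation "depth_of \<equiv> depth \<pi> g f"
abbreviation "lap \<equiv> attach_lap \<pi> g f"
abbreviation "edge \<equiv> block_edge \<pi> g f"
abbreviation "hgraph \<equiv> block_graph \<pi> g f"
abbreviation "parent_step \<equiv> walk_step f lap_owner choices"

lemma code_parts: "\<pi> \<in> block_partitions W d" "g \<in> \<pi> \<rightarrow>\<^sub>E R_H k m H" "f \<in> cycle_free_maps \<pi> choices {None} lap_owner"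
  using in_codes by (auto simp: codes_def)

lemma block:
  assumes "N \<in> \<pi>"
  shows "N \<subseteq> W" "card N = d" "finite N" "N \<noteq> {}" "N \<inter> R = {}"
proof -
  show "N \<subseteq> W" "card N = d" using code_parts(1) assms by (auto simp: block_partitions_def)
  then show "finite N" "N \<noteq> {}" using d1 by (auto intro: card_ge_0_finite)
  show "N \<inter> R = {}" using \<open>N \<subseteq> W\<close> by auto
qed

lemma block_disjoint: "N1 \<in> \<pi> \<Longrightarrow> N2 \<in> \<pi> \<Longrightarrow> N1 \<noteq> N2 \<Longrightarrow> N1 \<inter> N2 = {}"
  using code_parts(1) by (auto simp: block_partitions_def)

lemma Union_blocks: "\<Union>\<pi> = W"
  using code_parts(1) by (auto simp: block_partitions_def)

lemma g_in_R_H: "N \<in> \<pi> \<Longrightarrow> g N \<in> R_H k m H"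
  using code_parts(2) by auto

lemma f_cases: "N \<in> \<pi> \<Longrightarrow> f N = None \<or> (\<exists>N' L. f N = Some (N', L) \<and> N' \<in> \<pi> \<and> L \<in> g N' \<and> L \<noteq> R)"
  using code_parts(3) by (fastforce simp: cycle_free_maps_def lap_choices_def)

lemma f_Some: "N \<in> \<pi> \<Longrightarrow> f N = Some (N', L) \<Longrightarrow> N' \<in> \<pi> \<and> L \<in> g N' \<and> L \<noteq> R"
  using f_cases by fastforce

lemma f_reaches_root: "b \<in> choices \<Longrightarrow> \<exists>t. (parent_step ^^ t) b = None"
  using code_parts(3) by (auto simp: cycle_free_maps_def)

lemma walk_step_Some: "Some (N', L) \<in> choices \<Longrightarrow> parent_step (Some (N', L)) = f N'"
  by (simp add: walk_step_def lap_owner_def)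

lemma depth_None: "f N = None \<Longrightarrow> depth_of N = 0"
  by (simp add: depth_def)

lemma depth_Some:
  assumes N: "N \<in> \<pi>" and fs: "f N = Some (N', L)"
  shows "depth_of N = Suc (depth_of N')"
proof -
  have b: "Some (N', L) \<in> choices" using f_Some[OF N fs] by (auto simp: lap_choices_def)
  obtain t where t: "(parent_step ^^ t) (Some (N', L)) = None" using f_reaches_root[OF b] by blast
  have "depth_of N = (LEAST t. (parent_step ^^ t) (Some (N', L)) = None)" by (simp add: depth_def fs)
  also have "\<dots> = Suc (LEAST t. (parent_step ^^ Suc t) (Some (N', L)) = None)"
    by (rule Least_Suc[of _ t]) (use t in auto)
  also have "(\<lambda>t. (parent_step ^^ Suc t) (Some (N', L))) = (\<lambda>t. (parent_step ^^ t) (f N'))"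
    by (simp only: funpow_Suc_apply walk_step_Some[OF b])
  finally show ?thesis by (simp add: depth_def)
qed

lemma lap_rec:
  assumes N: "N \<in> \<pi>"
  shows "lap N = (case f N of None \<Rightarrow> R | Some (N', L) \<Rightarrow> lbl (lap N') N' ` L)"
proof (cases "f N")
  case None then show ?thesis by (simp add: attach_lap_def)
next
  case (Some a)
  then obtain N' L where fs: "f N = Some (N', L)" by (cases a) auto
  have "lap N = lbl (lap_iter f (depth_of N) N') N' ` L" by (simp add: attach_lap_def fs)
  also have "lap_iter f (depth_of N) N' = lap N'" using depth_Some[OF N fs] by (simp add: attach_lap_def)
  finally show ?thesis by (simp add: fs)
qed

lemma lap_None: "N \<in> \<pi> \<Longrightarrow> f N = None \<Longrightarrow> lap N = R"
  using lap_rec by simp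

lemma lap_Some: "N \<in> \<pi> \<Longrightarrow> f N = Some (N', L) \<Longrightarrow> lap N = lbl (lap N') N' ` L"
  using lap_rec by simp

lemma lap_props:
  assumes "N \<in> \<pi>"
  shows "finite (lap N) \<and> card (lap N) = m \<and> lap N \<subseteq> R \<union> \<Union>{N''\<in>\<pi>. depth_of N'' < depth_of N}"
  using assms
proof (induction "depth_of N" arbitrary: N rule: less_induct)
  case less
  show ?case
  proof (cases "f N")
    case None then show ?thesis using lap_None[OF less.prems] by simp
  next
    case (Some a)
    then obtain N' L where fs: "f N = Some (N', L)" by (cases a) auto
    have N'L: "N' \<in> \<pi>" "L \<in> g N'" "L \<noteq> R" using f_Some[OF less.prems fs] by auto
    have dN: "depth_of N = Suc (depth_of N')" using depth_Some[OF less.prems fs] .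
    have IH: "finite (lap N') \<and> card (lap N') = m \<and> lap N' \<subseteq> R \<union> \<Union>{N''\<in>\<pi>. depth_of N'' < depth_of N'}"
      using less.hyps[of N'] dN N'L by simp
    have disj: "lap N' \<inter> N' = {}"
    proof -
      have "N' \<inter> N'' = {}" if "N'' \<in> \<pi>" "depth_of N'' < depth_of N'" for N''
        using block_disjoint[OF N'L(1) that(1)] that by auto
      then show ?thesis using IH block(5)[OF N'L(1)] by blast
    qed
    have L: "L \<subseteq> {1..k}" "card L = m" using R_H_props(2)[OF g_in_R_H[OF N'L(1)] N'L(2)] by auto
    have bj: "bij_betw (lbl (lap N') N') {1..k} (lap N' \<union> N')"
      using lbl_bij IH block[OF N'L(1)] disj by auto
    have pN: "lap N = lbl (lap N') N' ` L" using lap_Some[OF less.prems fs] .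
    have "card (lap N) = m" using pN L bj card_image[of "lbl (lap N') N'" L]
      by (metis bij_betw_def inj_on_subset)
    moreover have "lap N \<subseteq> lap N' \<union> N'" using pN L bj by (auto simp: bij_betw_def)
    moreover have "lap N' \<union> N' \<subseteq> R \<union> \<Union>{N''\<in>\<pi>. depth_of N'' < depth_of N}"
      using IH dN N'L(1) by auto
    moreover have "finite (lap N' \<union> N')" using IH block(3)[OF N'L(1)] by simp
    ultimately show ?thesis by (meson finite_subset subset_trans)
  qed
qed

lemma finite_lap: "N \<in> \<pi> \<Longrightarrow> finite (lap N)" using lap_props by blast
lemma card_lap: "N \<in> \<pi> \<Longrightarrow> card (lap N) = m" using lap_props by blast
lemma lap_below: "N \<in> \<pi> \<Longrightarrow> lap N \<subseteq> R \<union> \<Union>{N''\<in>\<pi>. depth_of N'' < depth_of N}" using lap_props by blast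

lemma lap_block_disjoint: "N \<in> \<pi> \<Longrightarrow> lap N \<inter> N = {}"
proof -
  assume N: "N \<in> \<pi>"
  have "N \<inter> N'' = {}" if "N'' \<in> \<pi>" "depth_of N'' < depth_of N" for N''
    using block_disjoint[OF N that(1)] that by auto
  then show ?thesis using lap_below[OF N] block(5)[OF N] by blast
qed

lemma block_meets_edge:
  assumes "N1 \<in> \<pi>" "N2 \<in> \<pi>" "N1 \<inter> edge N2 \<noteq> {}"
  shows "N1 = N2 \<or> depth_of N1 < depth_of N2"
proof (rule ccontr)
  assume c: "\<not> (N1 = N2 \<or> depth_of N1 < depth_of N2)"
  then have "N1 \<inter> N2 = {}" using block_disjoint assms by auto
  then obtain v where v: "v \<in> N1" "v \<in> lap N2" using assms(3) by (auto simp: block_edge_def)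
  then have "v \<in> R \<union> \<Union>{N''\<in>\<pi>. depth_of N'' < depth_of N2}" using lap_below[OF assms(2)] by auto
  moreover have "v \<notin> R" using v block(5)[OF assms(1)] by auto
  ultimately obtain N'' where N'': "N'' \<in> \<pi>" "depth_of N'' < depth_of N2" "v \<in> N''" by auto
  then have "N'' = N1" using block_disjoint[OF assms(1) N''(1)] v by auto
  then show False using c N'' by auto
qed

lemma edge_props:
  assumes N: "N \<in> \<pi>"
  shows "finite (edge N)" "card (edge N) = k" "edge N \<subseteq> {1..n}" "N \<subseteq> edge N" "lap N \<subseteq> edge N"
proof -
  show "finite (edge N)" using finite_lap[OF N] block(3)[OF N] by (simp add: block_edge_def)
  show "card (edge N) = k" using finite_lap[OF N] block(3)[OF N] lap_block_disjoint[OF N] card_lap[OF N] block(2)[OF N] kmd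
    by (simp add: block_edge_def card_Un_disjoint)
  have "\<Union>{N''\<in>\<pi>. depth_of N'' < depth_of N} \<subseteq> W" using Union_blocks by auto
  then have "lap N \<subseteq> R \<union> W" using lap_below[OF N] by blast
  moreover have "R \<union> W \<subseteq> {1..n}" by auto
  ultimately show "edge N \<subseteq> {1..n}" using block(1)[OF N] unfolding block_edge_def by blast
  show "N \<subseteq> edge N" "lap N \<subseteq> edge N" by (auto simp: block_edge_def)
qed

lemma inj_on_edge: "inj_on edge \<pi>"
proof (rule inj_onI)
  fix N1 N2 assume N: "N1 \<in> \<pi>" "N2 \<in> \<pi>" "edge N1 = edge N2"
  show "N1 = N2"
  proof (rule ccontr)
    assume ne: "N1 \<noteq> N2"
    have "N1 \<inter> edge N2 \<noteq> {}" using N edge_props(4)[OF N(1)] block(4)[OF N(1)] by auto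
    then have "depth_of N1 < depth_of N2" using block_meets_edge N ne by auto
    moreover have "N2 \<inter> edge N1 \<noteq> {}" using N edge_props(4)[OF N(2)] block(4)[OF N(2)] by auto
    then have "depth_of N2 < depth_of N1" using block_meets_edge N ne by auto
    ultimately show False by simp
  qed
qed

lemma edge_minus_lap: "N \<in> \<pi> \<Longrightarrow> edge N - lap N = N"
  using lap_block_disjoint by (auto simp: block_edge_def)

lemma hgraph_props:
  assumes N: "N \<in> \<pi>"
  shows "H_graph_on k H (edge N) (hgraph N)" "lap N \<in> hgraph N" "\<And>L. L \<in> hgraph N \<Longrightarrow> L \<subseteq> edge N \<and> card L = m"
    "bij_betw (lbl (lap N) N) {1..k} (edge N)"
proof -
  have bj: "bij_betw (lbl (lap N) N) {1..k} (lap N \<union> N)"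
    using lbl_bij finite_lap[OF N] block[OF N] card_lap[OF N] lap_block_disjoint[OF N] by auto
  then show "bij_betw (lbl (lap N) N) {1..k} (edge N)" by (simp add: block_edge_def)
  have kR: "lbl (lap N) N ` R = lap N"
    using lbl_bij finite_lap[OF N] block[OF N] card_lap[OF N] lap_block_disjoint[OF N] by auto
  obtain \<sigma> where s: "bij_betw \<sigma> {1..k} {1..k}" "g N = relabel \<sigma> H" using R_H_props(4)[OF g_in_R_H[OF N]] by blast
  have "hgraph N = relabel (lbl (lap N) N \<circ> \<sigma>) H" by (simp add: block_graph_def s relabel_comp)
  moreover have "bij_betw (lbl (lap N) N \<circ> \<sigma>) {1..k} (edge N)"
    using bij_betw_trans[OF s(1) bj] by (simp add: block_edge_def)
  ultimately show "H_graph_on k H (edge N) (hgraph N)" by (auto simp: H_graph_on_def relabel_def)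
  have "lbl (lap N) N ` R \<in> hgraph N" unfolding block_graph_def relabel_def
    using R_H_props(1)[OF g_in_R_H[OF N]] by (rule imageI)
  then show "lap N \<in> hgraph N" using kR by simp
  show "\<And>L. L \<in> hgraph N \<Longrightarrow> L \<subseteq> edge N \<and> card L = m"
  proof -
    fix L assume "L \<in> hgraph N"
    then obtain L0 where L0: "L0 \<in> g N" "L = lbl (lap N) N ` L0" by (auto simp: block_graph_def relabel_def)
    have L0k: "L0 \<subseteq> {1..k}" "card L0 = m" using R_H_props(2)[OF g_in_R_H[OF N] L0(1)] by auto
    have b2: "bij_betw (lbl (lap N) N) {1..k} (edge N)" using bj by (simp add: block_edge_def)
    have "L \<subseteq> edge N" using L0(2) L0k(1) b2 unfolding bij_betw_def by blast
    moreover have "inj_on (lbl (lap N) N) L0" using b2 L0k(1) unfolding bij_betw_def by (blast intro: inj_on_subset)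
    then have "card L = m" using L0(2) L0k(2) by (simp add: card_image)
    ultimately show "L \<subseteq> edge N \<and> card L = m" by simp
  qed
qed

lemma parent_props:
  assumes N: "N \<in> \<pi>" and fs: "f N = Some (N', L)"
  shows "N' \<in> \<pi>" "lap N \<subseteq> edge N'" "lap N \<noteq> lap N'" "lap N \<inter> N' \<noteq> {}" "lap N \<noteq> R" "lap N \<in> hgraph N'"
    "N' \<noteq> N" "L = unlbl (lap N') N' ` lap N"
proof -
  have N'L: "N' \<in> \<pi>" "L \<in> g N'" "L \<noteq> R" using f_Some[OF N fs] by auto
  show "N' \<in> \<pi>" by fact
  have L: "L \<subseteq> {1..k}" "card L = m" using R_H_props(2)[OF g_in_R_H[OF N'L(1)] N'L(2)] by auto
  have bj: "bij_betw (lbl (lap N') N') {1..k} (edge N')" using hgraph_props(4)[OF N'L(1)] .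
  have kR: "lbl (lap N') N' ` R = lap N'"
    using lbl_bij finite_lap[OF N'L(1)] block[OF N'L(1)] card_lap[OF N'L(1)] lap_block_disjoint[OF N'L(1)] by auto
  have pN: "lap N = lbl (lap N') N' ` L" using lap_Some[OF N fs] .
  show "lap N \<subseteq> edge N'" using pN L bj by (auto simp: bij_betw_def)
  have inj: "inj_on (lbl (lap N') N') {1..k}" using bj by (simp add: bij_betw_def)
  show ne: "lap N \<noteq> lap N'"
  proof
    assume "lap N = lap N'"
    then have "lbl (lap N') N' ` L = lbl (lap N') N' ` R" using pN kR by simp
    then have "L = R" using inj L inj_on_image_eq_iff[of "lbl (lap N') N'" "{1..k}" L R] kmd by auto
    then show False using N'L by simp
  qed
  show "lap N \<inter> N' \<noteq> {}"
  proof
    assume "lap N \<inter> N' = {}"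
    then have "lap N \<subseteq> lap N'" using \<open>lap N \<subseteq> edge N'\<close> by (auto simp: block_edge_def)
    then have "lap N = lap N'" using card_lap[OF N] card_lap[OF N'L(1)] finite_lap[OF N'L(1)]
      by (simp add: card_subset_eq)
    then show False using ne by simp
  qed
  then show "lap N \<noteq> R" using block(5)[OF N'L(1)] by auto
  show "lap N \<in> hgraph N'" using pN N'L(2) by (auto simp: block_graph_def relabel_def)
  show "N' \<noteq> N" using depth_Some[OF N fs] by auto
  show "L = unlbl (lap N') N' ` lap N"
  proof -
    have "unlbl (lap N') N' ` lap N = (unlbl (lap N') N' \<circ> lbl (lap N') N') ` L" by (simp add: pN image_comp)
    also have "\<dots> = id ` L"
    proof (rule image_cong[OF refl])
      fix j assume "j \<in> L"
      then have "j \<in> {1..k}" using L by auto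
      then show "(unlbl (lap N') N' \<circ> lbl (lap N') N') j = id j"
        using unlbl_lbl(2)[OF finite_lap[OF N'L(1)] block(3)[OF N'L(1)] card_lap[OF N'L(1)] block(2)[OF N'L(1)] lap_block_disjoint[OF N'L(1)]]
        by simp
    qed
    also have "\<dots> = L" by simp
    finally show ?thesis by simp
  qed
qed

lemma lap_eq_root_iff: "N \<in> \<pi> \<Longrightarrow> lap N = R \<longleftrightarrow> f N = None"
proof (cases "f N")
  case None
  assume "N \<in> \<pi>" then show ?thesis using lap_None None by simp
next
  case (Some a)
  assume N: "N \<in> \<pi>"
  obtain N' L where fs: "f N = Some (N', L)" using Some by (cases a) auto
  then show ?thesis using parent_props(5)[OF N fs] by simp
qed

lemma parent_unique:
  assumes N: "N \<in> \<pi>" and fs: "f N = Some (N', L)"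
    and N'': "N'' \<in> \<pi>" "lap N \<inter> N'' \<noteq> {}" "lap N \<subseteq> edge N''"
  shows "N'' = N'"
proof (rule ccontr)
  assume ne: "N'' \<noteq> N'"
  note pf = parent_props[OF N fs]
  have "N'' \<inter> edge N' \<noteq> {}" using N''(2) pf(2) by blast
  then have "depth_of N'' < depth_of N'" using block_meets_edge[OF N''(1) pf(1)] ne by auto
  moreover have "N' \<inter> edge N'' \<noteq> {}" using pf(4) N''(3) by blast
  then have "depth_of N' < depth_of N''" using block_meets_edge[OF pf(1) N''(1)] ne by auto
  ultimately show False by simp
qed

lemma blocks_nonempty: "\<pi> \<noteq> {}"
proof -
  have "W \<noteq> {}" using e1 d1 by (auto simp: not_less_eq_eq)
  then show ?thesis using Union_blocks by auto
qed

lemma root_block_exists: "\<exists>N0\<in>\<pi>. f N0 = None"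
proof -
  obtain N where N: "N \<in> \<pi>" using blocks_nonempty by auto
  have "\<exists>N0\<in>\<pi>. f N0 = None" if "N \<in> \<pi>" "depth_of N = t" for t N
    using that
  proof (induction t arbitrary: N rule: less_induct)
    case (less t)
    show ?case
    proof (cases "f N")
      case None then show ?thesis using less.prems by auto
    next
      case (Some a)
      then obtain N' L where fs: "f N = Some (N', L)" by (cases a) auto
      show ?thesis using less.IH[of "depth_of N'" N'] depth_Some[OF less.prems(1) fs] less.prems f_Some[OF less.prems(1) fs]
        by auto
    qed
  qed
  then show ?thesis using N by blast
qed

lemma card_blocks: "card \<pi> = e"
proof -
  have fin: "finite \<pi>"
  proof (rule finite_subset[of _ "Pow W"])
    show "\<pi> \<subseteq> Pow W" using block(1) by auto
  qed simp
  have "card W = card (\<Union>\<pi>)" using Union_blocks by simp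
  also have "\<dots> = (\<Sum>N\<in>\<pi>. card N)"
    using fin block(3) block_disjoint by (intro card_UN_disjoint[of \<pi> "\<lambda>x. x", simplified]) auto
  also have "\<dots> = d * card \<pi>" using block(2) by simp
  finally have "d * e = d * card \<pi>" by (simp add: mult.commute)
  moreover have "d \<noteq> 0" using d1 by simp
  ultimately show ?thesis by simp
qed

lemma finite_blocks: "finite \<pi>"
proof -
  have "0 < card \<pi>" using card_blocks e1 by simp
  then show ?thesis by (rule card_ge_0_finite)
qed

lemma depth_0_root: "N \<in> \<pi> \<Longrightarrow> depth_of N = 0 \<Longrightarrow> f N = None"
proof (rule ccontr)
  assume N: "N \<in> \<pi>" "depth_of N = 0" "f N \<noteq> None"
  then obtain N' L where "f N = Some (N', L)" by (cases "f N") auto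
  then show False using depth_Some[OF N(1)] N(2) by simp
qed


lemma lap_in_hgraph_of_shallower:
  assumes N1: "N1 \<in> \<pi>" and N2: "N2 \<in> \<pi>" and ne: "N1 \<noteq> N2" and dd: "depth_of N2 \<le> depth_of N1"
    and sub: "lap N1 \<subseteq> edge N2"
  shows "lap N1 \<in> hgraph N2"
proof (cases "f N1")
  case None
  then have p1: "lap N1 = R" using lap_None[OF N1] by simp
  then have "R \<subseteq> lap N2" using sub block(5)[OF N2] by (auto simp: block_edge_def)
  then have "R = lap N2" using card_subset_eq[OF finite_lap[OF N2]] card_lap[OF N2] by simp
  then show ?thesis using p1 hgraph_props(2)[OF N2] by simp
next
  case (Some a)
  then obtain N' L where fs: "f N1 = Some (N', L)" by (cases a) auto
  note pf = parent_props[OF N1 fs]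
  show ?thesis
  proof (cases "N' = N2")
    case True then show ?thesis using pf(6) by simp
  next
    case False
    obtain v where v: "v \<in> lap N1" "v \<in> N'" using pf(4) by auto
    have "N' \<inter> edge N2 \<noteq> {}" using v sub by auto
    then have d1': "depth_of N' < depth_of N2" using block_meets_edge[OF pf(1) N2] False by auto
    have dN1: "depth_of N1 = Suc (depth_of N')" using depth_Some[OF N1 fs] .
    then have dN2: "depth_of N2 = depth_of N1" using dd d1' by simp
    have "N2 \<inter> edge N' = {}"
    proof (rule ccontr)
      assume "N2 \<inter> edge N' \<noteq> {}"
      then have "N2 = N' \<or> depth_of N2 < depth_of N'" using block_meets_edge[OF N2 pf(1)] by simp
      then show False using False dN2 dN1 by auto
    qed
    then have "lap N1 \<inter> N2 = {}" using pf(2) by auto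
    then have "lap N1 \<subseteq> lap N2" using sub by (auto simp: block_edge_def)
    then have "lap N1 = lap N2" using card_subset_eq[OF finite_lap[OF N2]] card_lap[OF N1] card_lap[OF N2] by simp
    then show ?thesis using hgraph_props(2)[OF N2] by simp
  qed
qed

lemma shared_lap_in_hgraphs_ordered:
  assumes N1: "N1 \<in> \<pi>" and N2: "N2 \<in> \<pi>" and ne: "N1 \<noteq> N2" and dd: "depth_of N2 \<le> depth_of N1"
    and c: "card (edge N1 \<inter> edge N2) = m"
  shows "edge N1 \<inter> edge N2 \<in> hgraph N1 \<and> edge N1 \<inter> edge N2 \<in> hgraph N2"
proof -
  have "N1 \<inter> edge N2 = {}"
  proof (rule ccontr)
    assume "N1 \<inter> edge N2 \<noteq> {}"
    then show False using block_meets_edge[OF N1 N2] ne dd by auto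
  qed
  then have "edge N1 \<inter> edge N2 \<subseteq> lap N1" by (auto simp: block_edge_def)
  then have eq: "edge N1 \<inter> edge N2 = lap N1" using card_subset_eq[OF finite_lap[OF N1]] c card_lap[OF N1] by simp
  then have "lap N1 \<subseteq> edge N2" by auto
  then have "lap N1 \<in> hgraph N2" using lap_in_hgraph_of_shallower[OF N1 N2 ne dd] by simp
  then show ?thesis using eq hgraph_props(2)[OF N1] by simp
qed

lemma shared_lap_in_hgraphs:
  assumes N1: "N1 \<in> \<pi>" and N2: "N2 \<in> \<pi>" and ne: "N1 \<noteq> N2"
    and c: "card (edge N1 \<inter> edge N2) = m"
  shows "edge N1 \<inter> edge N2 \<in> hgraph N1 \<and> edge N1 \<inter> edge N2 \<in> hgraph N2"
proof (cases "depth_of N2 \<le> depth_of N1")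
  case True then show ?thesis using shared_lap_in_hgraphs_ordered[OF N1 N2 ne True c] by simp
next
  case False
  then have "depth_of N1 \<le> depth_of N2" by simp
  moreover have "card (edge N2 \<inter> edge N1) = m" using c by (simp add: Int_commute)
  ultimately have "edge N2 \<inter> edge N1 \<in> hgraph N2 \<and> edge N2 \<inter> edge N1 \<in> hgraph N1"
    using shared_lap_in_hgraphs_ordered[OF N2 N1 ne[symmetric]] by simp
  then show ?thesis by (simp add: Int_commute)
qed

lemma in_take_nth: "x \<in> set (take i xs) \<Longrightarrow> \<exists>h<i. h < length xs \<and> xs ! h = x"
  by (auto simp: in_set_conv_nth)

lemma sorted_depth_index_less:
  assumes "sorted (map depth_of bs)" "i < length bs" "j < length bs" "depth_of (bs ! j) < depth_of (bs ! i)"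
  shows "j < i"
proof (rule ccontr)
  assume "\<not> j < i"
  then have "(map depth_of bs) ! i \<le> (map depth_of bs) ! j" using assms by (intro sorted_nth_mono) auto
  then show False using assms by simp
qed

lemma first_lap_root:
  assumes bs: "distinct bs" "set bs = \<pi>" "sorted (map depth_of bs)"
  shows "bs \<noteq> []" "lap (bs ! 0) = R"
proof -
  show ne: "bs \<noteq> []" using bs(2) blocks_nonempty by auto
  then have l0: "0 < length bs" by simp
  obtain N0 where N0: "N0 \<in> \<pi>" "f N0 = None" using root_block_exists by blast
  then obtain j0 where j0: "j0 < length bs" "bs ! j0 = N0" using bs by (auto simp: in_set_conv_nth)
  have "(map depth_of bs) ! 0 \<le> (map depth_of bs) ! j0"
    using sorted_nth_mono[OF bs(3), of 0 j0] j0 by simp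
  then have "depth_of (bs ! 0) \<le> depth_of (bs ! j0)" using j0 l0 by simp
  then have "depth_of (bs ! 0) = 0" using j0 N0 depth_None by simp
  moreover have b0: "bs ! 0 \<in> \<pi>" using bs(2) l0 nth_mem by blast
  ultimately have f0: "f (bs ! 0) = None" using depth_0_root by blast
  show "lap (bs ! 0) = R" using lap_None[OF b0 f0] .
qed

lemma attach_earlier:
  assumes bs: "distinct bs" "set bs = \<pi>" "sorted (map depth_of bs)"
    and i: "1 \<le> i" "i < length bs"
  shows "\<exists>j<i. lap (bs ! i) \<subseteq> edge (bs ! j) \<and> edge (bs ! i) \<inter> edge (bs ! j) = lap (bs ! i)"
proof -
  let ?N = "bs ! i"
  have N: "?N \<in> \<pi>" using bs i by auto
  show ?thesis
  proof (cases "f ?N")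
    case None
    have l0: "0 < length bs" using i(2) by linarith
    then have b0: "bs ! 0 \<in> \<pi>" using bs(2) nth_mem by blast
    have ne: "bs ! 0 \<noteq> ?N" using nth_eq_iff_index_eq[OF bs(1) l0 i(2)] i(1) by simp
    have p0: "lap (bs ! 0) = R" using first_lap_root[OF bs] by simp
    have pN: "lap ?N = R" using lap_None[OF N None] .
    have "edge ?N \<inter> edge (bs ! 0) = R" using p0 pN block(5)[OF N] block(5)[OF b0] block_disjoint[OF N b0 ne[symmetric]]
      by (auto simp: block_edge_def)
    then show ?thesis using i p0 pN by (intro exI[of _ 0]) (auto simp: block_edge_def)
  next
    case (Some a)
    then obtain N' L where fs: "f ?N = Some (N', L)" by (cases a) auto
    note pf = parent_props[OF N fs]
    obtain j where j: "j < length bs" "bs ! j = N'" using pf(1) bs by (auto simp: in_set_conv_nth)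
    have "depth_of N' < depth_of ?N" using depth_Some[OF N fs] by simp
    then have ji: "j < i" using sorted_depth_index_less[OF bs(3) i(2) j(1)] j by simp
    have "?N \<inter> edge N' = {}"
    proof (rule ccontr)
      assume "?N \<inter> edge N' \<noteq> {}"
      then show False using block_meets_edge[OF N pf(1)] pf(7) depth_Some[OF N fs] by auto
    qed
    then have "edge ?N \<inter> edge N' = lap ?N" using pf(2) by (auto simp: block_edge_def)
    then show ?thesis using ji j pf(2) by auto
  qed
qed

lemma block_disjoint_earlier_edges:
  assumes bs: "distinct bs" "set bs = \<pi>" "sorted (map depth_of bs)"
    and i: "i < length bs" and h: "h < i"
  shows "bs ! i \<inter> edge (bs ! h) = {}"
proof (rule ccontr)
  assume c: "bs ! i \<inter> edge (bs ! h) \<noteq> {}"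
  have ne: "bs ! i \<noteq> bs ! h" using bs(1) i h nth_eq_iff_index_eq[OF bs(1)] by auto
  have "depth_of (bs ! i) < depth_of (bs ! h)" using block_meets_edge[OF _ _ c] ne bs i h by auto
  then have "i < h" using sorted_depth_index_less[OF bs(3)] i h by auto
  then show False using h by simp
qed

lemma depth_order_valid:
  assumes bs: "distinct bs" "set bs = \<pi>" "sorted (map depth_of bs)"
  shows "valid_order m (map edge bs)"
  unfolding valid_order_def
proof (intro allI impI)
  fix i assume i: "1 \<le> i \<and> i < length (map edge bs)"
  then have i': "1 \<le> i" "i < length bs" by auto
  obtain j where j: "j < i" "lap (bs ! i) \<subseteq> edge (bs ! j)" "edge (bs ! i) \<inter> edge (bs ! j) = lap (bs ! i)"
    using attach_earlier[OF bs i'] by blast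
  have N: "bs ! i \<in> \<pi>" using bs i' by auto
  have "card (map edge bs ! i \<inter> map edge bs ! j) = m" using j i' card_lap[OF N] by simp
  moreover have "(map edge bs ! i - map edge bs ! j) \<inter> \<Union>(set (take i (map edge bs))) = {}"
  proof -
    have "map edge bs ! i - map edge bs ! j \<subseteq> bs ! i" using j i' by (auto simp: block_edge_def)
    moreover have "bs ! i \<inter> \<Union>(set (take i (map edge bs))) = {}"
    proof -
      have "bs ! i \<inter> E = {}" if E: "E \<in> set (take i (map edge bs))" for E
      proof -
        obtain h where h: "h < i" "h < length (map edge bs)" "map edge bs ! h = E" using in_take_nth[OF E] by blast
        then show ?thesis using block_disjoint_earlier_edges[OF bs i'(2) h(1)] by auto
      qed
      then show ?thesis by blast
    qed
    ultimately show ?thesis by blast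
  qed
  ultimately show "\<exists>j<i. card (map edge bs ! i \<inter> map edge bs ! j) = m \<and>
        (map edge bs ! i - map edge bs ! j) \<inter> \<Union>(set (take i (map edge bs))) = {}" using j(1) by blast
qed

lemma depth_sorted_list_exists: "\<exists>bs. distinct bs \<and> set bs = \<pi> \<and> sorted (map depth_of bs)"
proof -
  obtain xs where "distinct xs" "set xs = \<pi>" using finite_distinct_list[OF finite_blocks] by blast
  then show ?thesis by (intro exI[of _ "sort_key depth_of xs"]) auto
qed

lemma root_lap_exists: "\<exists>N0\<in>\<pi>. lap N0 = R"
  using root_block_exists lap_None by blast

lemma Union_edges: "\<Union>(edge ` \<pi>) = {1..n}"
proof
  show "\<Union>(edge ` \<pi>) \<subseteq> {1..n}" using edge_props(3) by auto
  show "{1..n} \<subseteq> \<Union>(edge ` \<pi>)"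
  proof
    fix x assume x: "x \<in> {1..n}"
    show "x \<in> \<Union>(edge ` \<pi>)"
    proof (cases "x \<in> R")
      case True
      obtain N0 where "N0 \<in> \<pi>" "lap N0 = R" using root_lap_exists by blast
      then show ?thesis using True by (auto simp: block_edge_def)
    next
      case False
      then have "x \<in> W" using x by auto
      then have "x \<in> \<Union>\<pi>" using Union_blocks by simp
      then obtain N where "N \<in> \<pi>" "x \<in> N" by auto
      then show ?thesis by (auto simp: block_edge_def)
    qed
  qed
qed

lemma km_tree_edges: "km_tree k m n (edge ` \<pi>)"
proof -
  obtain bs where bs: "distinct bs" "set bs = \<pi>" "sorted (map depth_of bs)" using depth_sorted_list_exists by blast
  show ?thesis unfolding km_tree_valid_order
  proof (intro conjI)
    show "edge ` \<pi> \<noteq> {}" using blocks_nonempty by simp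
    show "rgraph k {1..n} (edge ` \<pi>)" using edge_props by (auto simp: rgraph_def)
    show "\<Union>(edge ` \<pi>) = {1..n}" by (rule Union_edges)
    show "\<exists>Es. distinct Es \<and> set Es = edge ` \<pi> \<and> valid_order m Es"
    proof (intro exI conjI)
      show "distinct (map edge bs)" using bs inj_on_edge by (simp add: distinct_map)
      show "set (map edge bs) = edge ` \<pi>" using bs by simp
    qed (rule depth_order_valid[OF bs])
  qed
qed

lemma the_block_of_edge: "N \<in> \<pi> \<Longrightarrow> (THE N'. N' \<in> \<pi> \<and> edge N' = edge N) = N"
  by (rule the_equality) (use inj_on_edge in \<open>auto simp: inj_on_def\<close>)

lemma decode_snd: "N \<in> \<pi> \<Longrightarrow> snd (decode \<pi> g f) (edge N) = hgraph N"
  by (auto simp: decode_def the_block_of_edge)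

lemma decode_in_built_trees: "decode \<pi> g f \<in> built_trees"
proof -
  define Hs where "Hs = snd (decode \<pi> g f)"
  have P: "decode \<pi> g f = (edge ` \<pi>, Hs)" by (simp add: decode_def Hs_def)
  have hsE: "N \<in> \<pi> \<Longrightarrow> Hs (edge N) = hgraph N" for N using decode_snd by (simp add: Hs_def)
  have "H_built_tree k m H n (edge ` \<pi>) Hs"
    unfolding H_built_tree_def
  proof (intro conjI)
    show "km_tree k m n (edge ` \<pi>)" by (rule km_tree_edges)
    show "\<forall>E\<in>edge ` \<pi>. H_graph_on k H E (Hs E)" using hgraph_props(1) hsE by auto
    show "\<forall>E. E \<notin> edge ` \<pi> \<longrightarrow> Hs E = {}" by (simp add: Hs_def decode_def)
    show "\<forall>E\<in>edge ` \<pi>. \<forall>E'\<in>edge ` \<pi>. E \<noteq> E' \<and> card (E \<inter> E') = m \<longrightarrow> E \<inter> E' \<in> Hs E \<and> E \<inter> E' \<in> Hs E'"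
    proof (intro ballI impI)
      fix E E' assume E: "E \<in> edge ` \<pi>" "E' \<in> edge ` \<pi>" "E \<noteq> E' \<and> card (E \<inter> E') = m"
      then obtain N1 N2 where N: "N1 \<in> \<pi>" "N2 \<in> \<pi>" "E = edge N1" "E' = edge N2" by auto
      then have "N1 \<noteq> N2" using E by auto
      then show "E \<inter> E' \<in> Hs E \<and> E \<inter> E' \<in> Hs E'" using shared_lap_in_hgraphs[OF N(1,2)] E N hsE by auto
    qed
  qed
  moreover have "card (edge ` \<pi>) = e" using card_blocks inj_on_edge by (simp add: card_image)
  moreover have "rooted_at (edge ` \<pi>) Hs R"
  proof -
    obtain N0 where "N0 \<in> \<pi>" "lap N0 = R" using root_lap_exists by blast
    then show ?thesis using hgraph_props(2) hsE by (force simp: rooted_at_def)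
  qed
  ultimately show ?thesis by (simp add: built_trees_def P)
qed


lemma g_from_hgraph: "N \<in> \<pi> \<Longrightarrow> g N = relabel (unlbl (lap N) N) (hgraph N)"
proof -
  assume N: "N \<in> \<pi>"
  have "relabel (unlbl (lap N) N) (hgraph N) = relabel (unlbl (lap N) N \<circ> lbl (lap N) N) (g N)"
    by (simp add: block_graph_def relabel_comp)
  also have "\<dots> = relabel id (g N)"
  proof (rule relabel_cong)
    fix x assume "x \<in> \<Union>(g N)"
    then obtain X where X: "X \<in> g N" "x \<in> X" by auto
    then have "x \<in> {1..k}" using R_H_props(2)[OF g_in_R_H[OF N] X(1)] by blast
    then show "(unlbl (lap N) N \<circ> lbl (lap N) N) x = id x"
      using unlbl_lbl(2)[OF finite_lap[OF N] block(3)[OF N] card_lap[OF N] block(2)[OF N] lap_block_disjoint[OF N]] by simp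
  qed
  finally show ?thesis by (simp add: relabel_id)
qed

end

section \<open>Decoding is injective\<close>

text \<open>Listing the decoded edges by depth gives a valid order in which the lap of the \<open>i\<close>-th edge is
  its intersection with the earlier edges; so the blocks and their laps, and with them \<open>g\<close> and
  \<open>f\<close>, can be read off the decoded tree.\<close>

locale ordered_code = tree_code +
  fixes Es :: "nat set list"
  assumes Es_dist: "distinct Es" and Es_set: "set Es = block_edge \<pi> g f ` \<pi>"
    and Es_valid: "valid_order m Es"
    and Es_ne: "Es \<noteq> []" and Es_R: "R \<subseteq> Es ! 0"
begin

definition block_at where "block_at i = (THE N. N \<in> \<pi> \<and> edge N = Es ! i)"
definition prefix_lap where "prefix_lap i = (if i = 0 then R else Es ! i \<inter> \<Union>(set (take i Es)))"

lemma block_at_props: "i < length Es \<Longrightarrow> block_at i \<in> \<pi> \<and> edge (block_at i) = Es ! i"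
proof -
  assume i: "i < length Es"
  then have "Es ! i \<in> edge ` \<pi>" using Es_set nth_mem by metis
  then obtain N where N: "N \<in> \<pi>" "edge N = Es ! i" by auto
  have "block_at i = N" unfolding block_at_def
    by (rule the_equality) (use N inj_on_edge in \<open>auto simp: inj_on_def\<close>)
  then show ?thesis using N by simp
qed

lemma block_at_inj: "i < length Es \<Longrightarrow> j < length Es \<Longrightarrow> block_at i = block_at j \<Longrightarrow> i = j"
  using block_at_props Es_dist nth_eq_iff_index_eq by metis

lemma prefix_lap_eq_lap: "i < length Es \<Longrightarrow> prefix_lap i = lap (block_at i) \<and> \<Union>(set (take (Suc i) Es)) = R \<union> \<Union>(block_at ` {..i})"
proof (induction i)
  case 0
  have b: "block_at 0 \<in> \<pi>" "edge (block_at 0) = Es ! 0" using block_at_props 0 by auto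
  have "R \<subseteq> lap (block_at 0)" using Es_R b block(5)[OF b(1)] by (auto simp: block_edge_def)
  moreover have "card R = m" by simp
  ultimately have q: "lap (block_at 0) = R" using card_subset_eq[OF finite_lap[OF b(1)]] card_lap[OF b(1)] by metis
  have "take (Suc 0) Es = [Es ! 0]" using Es_ne by (cases Es) auto
  then have "\<Union>(set (take (Suc 0) Es)) = lap (block_at 0) \<union> block_at 0" using b by (simp add: block_edge_def)
  then show ?case using q by (simp add: prefix_lap_def)
next
  case (Suc i)
  let ?E = "Es ! Suc i" and ?U = "\<Union>(set (take (Suc i) Es))" and ?N = "block_at (Suc i)"
  have IH: "?U = R \<union> \<Union>(block_at ` {..i})" using Suc by simp
  have b: "?N \<in> \<pi>" "edge ?N = ?E" using block_at_props Suc.prems by auto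
  obtain j where j: "j < Suc i" "card (?E \<inter> Es ! j) = m" "(?E - Es ! j) \<inter> ?U = {}"
    using Es_valid Suc.prems unfolding valid_order_def by (metis le_add1 plus_1_eq_Suc)
  have "Es ! j \<in> set (take (Suc i) Es)" using j(1) Suc.prems by (auto simp: in_set_conv_nth)
  then have "Es ! j \<subseteq> ?U" by auto
  then have EU: "?E \<inter> ?U = ?E \<inter> Es ! j" using j(3) by blast
  have NU: "?N \<inter> ?U = {}"
  proof -
    have "?N \<inter> block_at h = {}" if "h \<le> i" for h
    proof -
      have "block_at h \<noteq> ?N" using block_at_inj[of h "Suc i"] that Suc.prems by auto
      then show ?thesis using block_disjoint block_at_props that Suc.prems by auto
    qed
    then show ?thesis using IH block(5)[OF b(1)] by auto
  qed
  have "?E \<inter> ?U \<subseteq> lap ?N" using NU b by (auto simp: block_edge_def)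
  moreover have "card (?E \<inter> ?U) = m" using EU j(2) by simp
  ultimately have q: "?E \<inter> ?U = lap ?N" using card_subset_eq[OF finite_lap[OF b(1)]] card_lap[OF b(1)] by simp
  have "take (Suc (Suc i)) Es = take (Suc i) Es @ [?E]" using Suc.prems by (simp add: take_Suc_conv_app_nth)
  then have "\<Union>(set (take (Suc (Suc i)) Es)) = ?U \<union> ?E" by auto
  also have "\<dots> = ?U \<union> ?N" using q b by (auto simp: block_edge_def)
  also have "\<dots> = R \<union> \<Union>(block_at ` {..Suc i})" using IH by (auto simp: atMost_Suc)
  finally show ?case using q by (simp add: prefix_lap_def)
qed

lemma blocks_eq: "\<pi> = block_at ` {..<length Es}"
proof
  show "block_at ` {..<length Es} \<subseteq> \<pi>" using block_at_props by auto
  show "\<pi> \<subseteq> block_at ` {..<length Es}"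
  proof
    fix N assume N: "N \<in> \<pi>"
    then have "edge N \<in> set Es" using Es_set by auto
    then obtain i where i: "i < length Es" "Es ! i = edge N" by (auto simp: in_set_conv_nth)
    then have "block_at i = N" using block_at_props[OF i(1)] inj_on_edge N by (auto simp: inj_on_def)
    then show "N \<in> block_at ` {..<length Es}" using i by auto
  qed
qed

lemma block_at_eq: "i < length Es \<Longrightarrow> block_at i = Es ! i - prefix_lap i"
  using prefix_lap_eq_lap block_at_props edge_minus_lap by metis


end

context tree_count
begin

lemma tree_codeI: "(\<pi>, g, f) \<in> codes \<Longrightarrow> tree_code k m H e \<pi> g f"
  by (simp add: tree_code_def tree_code_axioms_def tree_count_axioms)


lemma decode_eq_same_laps:
  assumes d1: "(\<pi>1, g1, f1) \<in> codes" and d2: "(\<pi>2, g2, f2) \<in> codes"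
    and eq: "decode \<pi>1 g1 f1 = decode \<pi>2 g2 f2"
  shows "\<pi>1 = \<pi>2" "\<And>N. N \<in> \<pi>1 \<Longrightarrow> attach_lap \<pi>1 g1 f1 N = attach_lap \<pi>2 g2 f2 N"
proof -
  interpret A: tree_code k m H e \<pi>1 g1 f1 by (rule tree_codeI[OF d1])
  interpret B: tree_code k m H e \<pi>2 g2 f2 by (rule tree_codeI[OF d2])
  have T: "A.edge ` \<pi>1 = B.edge ` \<pi>2" using eq by (simp add: decode_def)
  obtain bs where bs: "distinct bs" "set bs = \<pi>1" "sorted (map A.depth_of bs)"
    using A.depth_sorted_list_exists by blast
  define Es where "Es = map A.edge bs"
  have Eprops: "distinct Es" "set Es = A.edge ` \<pi>1" "Es \<noteq> []" "R \<subseteq> Es ! 0" "valid_order m Es"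
  proof -
    show "distinct Es" using bs A.inj_on_edge by (simp add: Es_def distinct_map)
    show "set Es = A.edge ` \<pi>1" using bs by (simp add: Es_def)
    show ne: "Es \<noteq> []" using A.first_lap_root[OF bs] by (simp add: Es_def)
    have "A.lap (bs ! 0) = R" using A.first_lap_root[OF bs] by simp
    then show "R \<subseteq> Es ! 0" using ne by (auto simp: Es_def block_edge_def)
    show "valid_order m Es" using A.depth_order_valid[OF bs] by (simp add: Es_def)
  qed
  interpret A': ordered_code k m H e \<pi>1 g1 f1 Es
    by (rule ordered_code.intro[OF tree_codeI[OF d1]]) (unfold_locales, use Eprops in auto)
  interpret B': ordered_code k m H e \<pi>2 g2 f2 Es
    by (rule ordered_code.intro[OF tree_codeI[OF d2]]) (unfold_locales, use Eprops T in auto)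
  have bleq: "i < length Es \<Longrightarrow> A'.block_at i = B'.block_at i" for i
    using A'.block_at_eq B'.block_at_eq by (simp add: A'.prefix_lap_def B'.prefix_lap_def)
  show "\<pi>1 = \<pi>2" using A'.blocks_eq B'.blocks_eq bleq by auto
  show "A.lap N = B.lap N" if N: "N \<in> \<pi>1" for N
  proof -
    obtain i where i: "i < length Es" "N = A'.block_at i" using A'.blocks_eq N by auto
    then show ?thesis using A'.prefix_lap_eq_lap[OF i(1)] B'.prefix_lap_eq_lap[OF i(1)] bleq[OF i(1)]
      by (simp add: A'.prefix_lap_def B'.prefix_lap_def)
  qed
qed

lemma decode_inj:
  assumes d1: "(\<pi>1, g1, f1) \<in> codes" and d2: "(\<pi>2, g2, f2) \<in> codes"
    and eq: "decode \<pi>1 g1 f1 = decode \<pi>2 g2 f2"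
  shows "(\<pi>1, g1, f1) = (\<pi>2, g2, f2)"
proof -
  interpret A: tree_code k m H e \<pi>1 g1 f1 by (rule tree_codeI[OF d1])
  interpret B: tree_code k m H e \<pi>2 g2 f2 by (rule tree_codeI[OF d2])
  have pieq: "\<pi>1 = \<pi>2" and pleq: "\<And>N. N \<in> \<pi>1 \<Longrightarrow> A.lap N = B.lap N"
    using decode_eq_same_laps[OF d1 d2 eq] by auto
  have edeq: "A.edge N = B.edge N" if "N \<in> \<pi>1" for N using pleq[OF that] by (simp add: block_edge_def)
  have hseq: "A.hgraph N = B.hgraph N" if N: "N \<in> \<pi>1" for N
    using A.decode_snd[OF N] B.decode_snd[of N] eq edeq[OF N] N pieq by simp
  have "g1 N = g2 N" for N
    using A.g_from_hgraph B.g_from_hgraph pieq hseq pleq A.code_parts(2) B.code_parts(2)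
    by (cases "N \<in> \<pi>1") (auto simp: PiE_def extensional_def)
  moreover have "f1 N = f2 N" for N
  proof (cases "N \<in> \<pi>1")
    case False
    then show ?thesis using cycle_free_maps_undefined[OF A.code_parts(3)]
      cycle_free_maps_undefined[OF B.code_parts(3)] pieq by simp
  next
    case True
    have N2: "N \<in> \<pi>2" using True pieq by simp
    show ?thesis
    proof (cases "f1 N")
      case None
      then show ?thesis using A.lap_eq_root_iff[OF True] B.lap_eq_root_iff[OF N2] pleq[OF True] by simp
    next
      case (Some a)
      then obtain N1 L1 where fs1: "f1 N = Some (N1, L1)" by (cases a) auto
      then have "f2 N \<noteq> None"
        using A.lap_eq_root_iff[OF True] B.lap_eq_root_iff[OF N2] pleq[OF True] by simp
      then obtain N2' L2 where fs2: "f2 N = Some (N2', L2)" by (cases "f2 N") auto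
      note pa = A.parent_props[OF True fs1] and pb = B.parent_props[OF N2 fs2]
      have "N2' = N1"
        using A.parent_unique[OF True fs1] pb(1,2,4) pleq[OF True] edeq pieq by simp
      moreover have "L1 = L2" using pa(8) pb(8) \<open>N2' = N1\<close> pleq[OF True] pleq[OF pa(1)] by simp
      ultimately show ?thesis using fs1 fs2 by simp
    qed
  qed
  ultimately show ?thesis using pieq by (simp add: fun_eq_iff)
qed

end

section \<open>Every rooted built tree has a code\<close>

text \<open>Given a valid order of the edges starting at an edge through \<open>R\<close>, the \<open>i\<close>-th block is the
  \<open>i\<close>-th edge minus the earlier ones, and its parent is the first earlier edge containing its lap.\<close>

locale ordered_tree = tree_count +
  fixes T :: "nat set set" and Hs :: "nat set \<Rightarrow> nat set set" and Es :: "nat set list"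
  assumes built: "H_built_tree k m H n T Hs" and card_T: "card T = e"
    and Es_valid: "valid_order m Es" and Es_distinct: "distinct Es" and Es_set: "set Es = T"
    and Es_ne: "Es \<noteq> []" and R_in_first: "R \<in> Hs (Es ! 0)"
begin

lemma T_km_tree: "km_tree k m n T" using built by (simp add: H_built_tree_def)
lemma T_H_graph: "E \<in> T \<Longrightarrow> H_graph_on k H E (Hs E)" using built by (simp add: H_built_tree_def)
lemma T_out: "E \<notin> T \<Longrightarrow> Hs E = {}" using built by (simp add: H_built_tree_def)
lemma T_pair: "E \<in> T \<Longrightarrow> E' \<in> T \<Longrightarrow> E \<noteq> E' \<Longrightarrow> card (E \<inter> E') = m \<Longrightarrow> E \<inter> E' \<in> Hs E \<and> E \<inter> E' \<in> Hs E'"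
  using built by (simp add: H_built_tree_def)
lemma T_edge: "E \<in> T \<Longrightarrow> E \<subseteq> {1..n} \<and> card E = k"
  using T_km_tree by (simp add: km_tree_def rgraph_def)
lemma T_union: "\<Union>T = {1..n}" using T_km_tree by (simp add: km_tree_def)
lemma E_in: "i < length Es \<Longrightarrow> Es ! i \<in> T" using Es_set nth_mem by blast
lemma E_fin: "i < length Es \<Longrightarrow> finite (Es ! i)"
  using T_edge[OF E_in] by (meson finite_atLeastAtMost finite_subset)

lemma Hs_bij: "E \<in> T \<Longrightarrow> \<exists>\<sigma>. bij_betw \<sigma> {1..k} E \<and> Hs E = relabel \<sigma> H"
  using T_H_graph by (auto simp: H_graph_on_def relabel_def)

lemma Hs_elem: "E \<in> T \<Longrightarrow> L \<in> Hs E \<Longrightarrow> L \<subseteq> E \<and> card L = m"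
proof -
  assume E: "E \<in> T" and L: "L \<in> Hs E"
  obtain \<sigma> where s: "bij_betw \<sigma> {1..k} E" "Hs E = relabel \<sigma> H" using Hs_bij[OF E] by blast
  obtain L0 where L0: "L0 \<in> H" "L = \<sigma> ` L0" using L s(2) by (auto simp: relabel_def)
  have L0k: "L0 \<subseteq> {1..k}" "card L0 = m" using Hk L0(1) by (auto simp: rgraph_def)
  have "L \<subseteq> E" using L0 L0k s(1) by (auto simp: bij_betw_def)
  moreover have "inj_on \<sigma> L0" using s(1) L0k unfolding bij_betw_def by (blast intro: inj_on_subset)
  then have "card L = m" using L0 L0k by (simp add: card_image)
  ultimately show ?thesis by simp
qed

definition prefix_lap where "prefix_lap i = (if i = 0 then R else Es ! i \<inter> \<Union>(set (take i Es)))"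
definition block_at where "block_at i = Es ! i - prefix_lap i"

lemma R_sub0: "R \<subseteq> Es ! 0"
  using Hs_elem[OF E_in R_in_first] Es_ne by auto

lemma take_mem: "j < i \<Longrightarrow> i < length Es \<Longrightarrow> Es ! j \<in> set (take i Es)"
  by (auto simp: in_set_conv_nth intro!: exI[of _ j])

lemma prefix_lap_attach:
  assumes i: "1 \<le> i" "i < length Es"
  shows "\<exists>j<i. prefix_lap i = Es ! i \<inter> Es ! j \<and> card (prefix_lap i) = m"
proof -
  obtain j where j: "j < i" "card (Es ! i \<inter> Es ! j) = m" "(Es ! i - Es ! j) \<inter> \<Union>(set (take i Es)) = {}"
    using Es_valid i unfolding valid_order_def by blast
  have "Es ! j \<subseteq> \<Union>(set (take i Es))" using take_mem[OF j(1) i(2)] by auto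
  then have "Es ! i \<inter> \<Union>(set (take i Es)) = Es ! i \<inter> Es ! j" using j(3) by blast
  then show ?thesis using j i by (intro exI[of _ j]) (simp add: prefix_lap_def)
qed

lemma prefix_lap_props: "i < length Es \<Longrightarrow> prefix_lap i \<subseteq> Es ! i \<and> card (prefix_lap i) = m \<and> finite (prefix_lap i)"
proof -
  assume i: "i < length Es"
  show ?thesis
  proof (cases i)
    case 0 then show ?thesis using R_sub0 by (simp add: prefix_lap_def)
  next
    case (Suc i')
    then obtain j where "prefix_lap i = Es ! i \<inter> Es ! j" "card (prefix_lap i) = m" using prefix_lap_attach i by fastforce
    then show ?thesis using E_fin[OF i] by auto
  qed
qed

lemma Union_prefix_edges: "i < length Es \<Longrightarrow> \<Union>(set (take (Suc i) Es)) = R \<union> \<Union>(block_at ` {..i})"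
proof (induction i)
  case 0
  have "take (Suc 0) Es = [Es ! 0]" using Es_ne by (cases Es) auto
  then show ?case using R_sub0 by (auto simp: block_at_def prefix_lap_def)
next
  case (Suc i)
  have "take (Suc (Suc i)) Es = take (Suc i) Es @ [Es ! Suc i]" using Suc.prems by (simp add: take_Suc_conv_app_nth)
  then have "\<Union>(set (take (Suc (Suc i)) Es)) = \<Union>(set (take (Suc i) Es)) \<union> Es ! Suc i" by auto
  also have "Es ! Suc i = prefix_lap (Suc i) \<union> block_at (Suc i)" using prefix_lap_props[OF Suc.prems] by (auto simp: block_at_def)
  also have "prefix_lap (Suc i) \<subseteq> \<Union>(set (take (Suc i) Es))" by (simp add: prefix_lap_def)
  then have "\<Union>(set (take (Suc i) Es)) \<union> (prefix_lap (Suc i) \<union> block_at (Suc i)) = \<Union>(set (take (Suc i) Es)) \<union> block_at (Suc i)" by auto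
  also have "\<dots> = R \<union> \<Union>(block_at ` {..Suc i})" using Suc by (auto simp: atMost_Suc)
  finally show ?case .
qed

lemma block_at_disjoint_prefix: "i < length Es \<Longrightarrow> block_at i \<inter> (R \<union> \<Union>(block_at ` {..<i})) = {}"
proof (cases i)
  case 0 then show ?thesis by (auto simp: block_at_def prefix_lap_def)
next
  case (Suc i')
  assume i: "i < length Es"
  have "\<Union>(set (take i Es)) = R \<union> \<Union>(block_at ` {..i'})" using Union_prefix_edges[of i'] Suc i by simp
  moreover have "{..i'} = {..<i}" using Suc by auto
  moreover have "block_at i \<inter> \<Union>(set (take i Es)) = {}" using Suc by (auto simp: block_at_def prefix_lap_def)
  ultimately show ?thesis by simp
qed

lemma block_at_props: "i < length Es \<Longrightarrow> card (block_at i) = d \<and> finite (block_at i) \<and> block_at i \<subseteq> W \<and> block_at i \<noteq> {}"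
proof -
  assume i: "i < length Es"
  have q: "prefix_lap i \<subseteq> Es ! i" "card (prefix_lap i) = m" "finite (prefix_lap i)" using prefix_lap_props[OF i] by auto
  have "card (block_at i) = card (Es ! i) - card (prefix_lap i)" unfolding block_at_def using q by (simp add: card_Diff_subset)
  then have c: "card (block_at i) = d" using T_edge[OF E_in[OF i]] q by simp
  have f: "finite (block_at i)" using E_fin[OF i] by (simp add: block_at_def)
  have bR: "block_at i \<inter> R = {}" using block_at_disjoint_prefix[OF i] by auto
  have sub: "Es ! i \<subseteq> {1..n}" using T_edge[OF E_in[OF i]] by blast
  have sub2: "block_at i \<subseteq> {1..n}" using sub by (auto simp: block_at_def)
  have "block_at i \<subseteq> W"
  proof
    fix x assume x: "x \<in> block_at i"
    then have a: "1 \<le> x \<and> x \<le> n" using sub2 by auto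
    have "x \<notin> R" using bR x by auto
    then have "\<not> x \<le> m" using a by auto
    then show "x \<in> W" using a by simp
  qed
  moreover have "block_at i \<noteq> {}" using c d1 by auto
  ultimately show ?thesis using c f by simp
qed

lemma block_at_disjoint: "i < length Es \<Longrightarrow> j < length Es \<Longrightarrow> i \<noteq> j \<Longrightarrow> block_at i \<inter> block_at j = {}"
proof -
  assume ij: "i < length Es" "j < length Es" "i \<noteq> j"
  show ?thesis
  proof (cases "j < i")
    case True then show ?thesis using block_at_disjoint_prefix[OF ij(1)] by auto
  next
    case False then have "i < j" using ij by simp
    then show ?thesis using block_at_disjoint_prefix[OF ij(2)] by auto
  qed
qed

lemma block_at_inj: "i < length Es \<Longrightarrow> j < length Es \<Longrightarrow> block_at i = block_at j \<Longrightarrow> i = j"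
  using block_at_disjoint block_at_props by fastforce

lemma edge_split: "i < length Es \<Longrightarrow> Es ! i = prefix_lap i \<union> block_at i \<and> prefix_lap i \<inter> block_at i = {}"
  using prefix_lap_props by (auto simp: block_at_def)

definition blocks_of where "blocks_of = block_at ` {..<length Es}"

lemma blocks_of_partition: "blocks_of \<in> block_partitions W d"
  unfolding block_partitions_def
proof (intro CollectI conjI)
  show "\<forall>N\<in>blocks_of. N \<subseteq> W \<and> card N = d" using block_at_props by (auto simp: blocks_of_def)
  show "\<forall>N\<in>blocks_of. \<forall>N'\<in>blocks_of. N \<noteq> N' \<longrightarrow> N \<inter> N' = {}" using block_at_disjoint by (auto simp: blocks_of_def)
  show "\<Union>blocks_of = W"
  proof
    show "\<Union>blocks_of \<subseteq> W" using block_at_props by (auto simp: blocks_of_def)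
    have l: "length Es - 1 < length Es" using Es_ne by simp
    have "{..length Es - 1} = {..<length Es}" using Es_ne by (cases Es) auto
    then have "\<Union>(set Es) = R \<union> \<Union>blocks_of" using Union_prefix_edges[OF l] Es_ne by (simp add: blocks_of_def)
    then have eq: "{1..n} = R \<union> \<Union>blocks_of" using T_union Es_set by simp
    show "W \<subseteq> \<Union>blocks_of"
    proof
      fix x assume x: "x \<in> W"
      then have "x \<in> {1..n}" by auto
      then have "x \<in> R \<union> \<Union>blocks_of" using eq by blast
      moreover have "x \<notin> R" using x by auto
      ultimately show "x \<in> \<Union>blocks_of" by blast
    qed
  qed
qed

definition position where "position N = (THE i. i < length Es \<and> block_at i = N)"

lemma position_block_at: "i < length Es \<Longrightarrow> position (block_at i) = i"
  unfolding position_def by (rule the_equality) (use block_at_inj in auto)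

lemma prefix_lap_in_Hs: "i < length Es \<Longrightarrow> prefix_lap i \<in> Hs (Es ! i)"
proof (cases i)
  case 0 then show ?thesis using R_in_first by (simp add: prefix_lap_def)
next
  case (Suc i')
  assume i: "i < length Es"
  obtain j where j: "j < i" "prefix_lap i = Es ! i \<inter> Es ! j" "card (prefix_lap i) = m" using prefix_lap_attach i Suc by fastforce
  have "Es ! i \<noteq> Es ! j" using j(1) i nth_eq_iff_index_eq[OF Es_distinct] by auto
  then show ?thesis using T_pair[OF E_in[OF i] E_in] j i by auto
qed

definition parent_pos where "parent_pos i = (LEAST j. prefix_lap i \<subseteq> Es ! j)"

lemma parent_pos_props:
  assumes i: "1 \<le> i" "i < length Es"
  shows "parent_pos i < i" "prefix_lap i \<subseteq> Es ! parent_pos i" "Es ! i \<inter> Es ! parent_pos i = prefix_lap i" "prefix_lap i \<in> Hs (Es ! parent_pos i)"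
proof -
  obtain j where j: "j < i" "prefix_lap i = Es ! i \<inter> Es ! j" "card (prefix_lap i) = m" using prefix_lap_attach[OF i] by blast
  have qj: "prefix_lap i \<subseteq> Es ! j" using j by auto
  have "prefix_lap i \<subseteq> Es ! parent_pos i" unfolding parent_pos_def by (rule LeastI[of _ j]) (rule qj)
  moreover have "parent_pos i \<le> j" unfolding parent_pos_def by (rule Least_le) (rule qj)
  ultimately have "prefix_lap i \<subseteq> Es ! parent_pos i" "parent_pos i \<le> j" by auto
  then show p: "parent_pos i < i" "prefix_lap i \<subseteq> Es ! parent_pos i" using j by auto
  have "Es ! parent_pos i \<subseteq> \<Union>(set (take i Es))" using take_mem[OF p(1) i(2)] by auto
  then have "Es ! i \<inter> Es ! parent_pos i \<subseteq> prefix_lap i" using i by (auto simp: prefix_lap_def)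
  then show eq: "Es ! i \<inter> Es ! parent_pos i = prefix_lap i" using p prefix_lap_props[OF i(2)] by auto
  have ne: "Es ! i \<noteq> Es ! parent_pos i" using p(1) i nth_eq_iff_index_eq[OF Es_distinct] by auto
  have lap: "parent_pos i < length Es" using p(1) i by simp
  have "card (Es ! i \<inter> Es ! parent_pos i) = m" using eq j(3) by simp
  then have "Es ! i \<inter> Es ! parent_pos i \<in> Hs (Es ! parent_pos i)" using T_pair[OF E_in[OF i(2)] E_in[OF lap] ne] by simp
  then show "prefix_lap i \<in> Hs (Es ! parent_pos i)" using eq by simp
qed

lemma prefix_lap_ne_parent:
  assumes i: "1 \<le> i" "i < length Es" and ne: "prefix_lap i \<noteq> R"
  shows "prefix_lap i \<noteq> prefix_lap (parent_pos i)"
proof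
  assume eq: "prefix_lap i = prefix_lap (parent_pos i)"
  show False
  proof (cases "parent_pos i = 0")
    case True then show False using eq ne by (simp add: prefix_lap_def)
  next
    case False
    have lap: "parent_pos i < length Es" using parent_pos_props(1)[OF i] i by simp
    obtain j' where j': "j' < parent_pos i" "prefix_lap (parent_pos i) = Es ! parent_pos i \<inter> Es ! j'"
      using prefix_lap_attach[of "parent_pos i"] False lap by auto
    then have "prefix_lap i \<subseteq> Es ! j'" using eq by auto
    then have "parent_pos i \<le> j'" unfolding parent_pos_def by (rule Least_le)
    then show False using j' by simp
  qed
qed

lemma lbl_edge:
  assumes i: "i < length Es"
  shows "bij_betw (lbl (prefix_lap i) (block_at i)) {1..k} (Es ! i)" "lbl (prefix_lap i) (block_at i) ` R = prefix_lap i"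
    "\<And>j. j \<in> {1..k} \<Longrightarrow> unlbl (prefix_lap i) (block_at i) (lbl (prefix_lap i) (block_at i) j) = j"
    "\<And>x. x \<in> Es ! i \<Longrightarrow> lbl (prefix_lap i) (block_at i) (unlbl (prefix_lap i) (block_at i) x) = x"
    "bij_betw (unlbl (prefix_lap i) (block_at i)) (Es ! i) {1..k}"
proof -
  have a: "finite (prefix_lap i)" "finite (block_at i)" "card (prefix_lap i) = m" "card (block_at i) = d" "prefix_lap i \<inter> block_at i = {}"
    using prefix_lap_props[OF i] block_at_props[OF i] edge_split[OF i] by auto
  have sp: "Es ! i = prefix_lap i \<union> block_at i" using edge_split[OF i] by simp
  show "bij_betw (lbl (prefix_lap i) (block_at i)) {1..k} (Es ! i)" using lbl_bij(1)[OF a] sp by simp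
  show "lbl (prefix_lap i) (block_at i) ` R = prefix_lap i" using lbl_bij(2)[OF a] .
  show "\<And>j. j \<in> {1..k} \<Longrightarrow> unlbl (prefix_lap i) (block_at i) (lbl (prefix_lap i) (block_at i) j) = j" using unlbl_lbl(2)[OF a] .
  show "\<And>x. x \<in> Es ! i \<Longrightarrow> lbl (prefix_lap i) (block_at i) (unlbl (prefix_lap i) (block_at i) x) = x" using unlbl_lbl(3)[OF a] sp by simp
  show "bij_betw (unlbl (prefix_lap i) (block_at i)) (Es ! i) {1..k}" using unlbl_lbl(1)[OF a] sp by simp
qed

lemma unlbl_prefix_lap: "i < length Es \<Longrightarrow> unlbl (prefix_lap i) (block_at i) ` prefix_lap i = R"
proof -
  assume i: "i < length Es"
  have "unlbl (prefix_lap i) (block_at i) ` prefix_lap i = unlbl (prefix_lap i) (block_at i) ` (lbl (prefix_lap i) (block_at i) ` R)"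
    using lbl_edge(2)[OF i] by simp
  also have "\<dots> = (unlbl (prefix_lap i) (block_at i) \<circ> lbl (prefix_lap i) (block_at i)) ` R" by (simp add: image_comp)
  also have "\<dots> = id ` R" by (rule image_cong[OF refl]) (use lbl_edge(3)[OF i] mk in auto)
  finally show ?thesis by simp
qed

definition g_of where "g_of N = relabel (unlbl (prefix_lap (position N)) N) (Hs (Es ! position N))"
definition f_of where "f_of N = (if prefix_lap (position N) = R then None else
   Some (block_at (parent_pos (position N)), unlbl (prefix_lap (parent_pos (position N))) (block_at (parent_pos (position N))) ` prefix_lap (position N)))"
definition g_code where "g_code = restrict g_of blocks_of"
definition f_code where "f_code = restrict f_of blocks_of"

lemma block_at_in_blocks_of: "i < length Es \<Longrightarrow> block_at i \<in> blocks_of" by (simp add: blocks_of_def)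

lemma g_of_block_at: "i < length Es \<Longrightarrow> g_of (block_at i) = relabel (unlbl (prefix_lap i) (block_at i)) (Hs (Es ! i))"
  by (simp add: g_of_def position_block_at)

lemma g_of_in_R_H: "i < length Es \<Longrightarrow> g_of (block_at i) \<in> R_H k m H"
proof -
  assume i: "i < length Es"
  obtain \<sigma> where s: "bij_betw \<sigma> {1..k} (Es ! i)" "Hs (Es ! i) = relabel \<sigma> H" using Hs_bij[OF E_in[OF i]] by blast
  have "g_of (block_at i) = relabel (unlbl (prefix_lap i) (block_at i) \<circ> \<sigma>) H" using g_of_block_at[OF i] s by (simp add: relabel_comp)
  moreover have "bij_betw (unlbl (prefix_lap i) (block_at i) \<circ> \<sigma>) {1..k} {1..k}" using bij_betw_trans[OF s(1) lbl_edge(5)[OF i]] .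
  ultimately have "H_graph_on k H {1..k} (g_of (block_at i))" by (auto simp: H_graph_on_def relabel_def)
  moreover have "R \<in> g_of (block_at i)"
  proof -
    have "unlbl (prefix_lap i) (block_at i) ` prefix_lap i \<in> relabel (unlbl (prefix_lap i) (block_at i)) (Hs (Es ! i))"
      unfolding relabel_def using prefix_lap_in_Hs[OF i] by (rule imageI)
    then show ?thesis using unlbl_prefix_lap[OF i] g_of_block_at[OF i] by simp
  qed
  ultimately show ?thesis by (simp add: R_H_def)
qed

lemma prefix_lap_0: "prefix_lap 0 = R" by (simp add: prefix_lap_def)

lemma f_of_Some:
  assumes i: "i < length Es" and ne: "prefix_lap i \<noteq> R"
  shows "f_of (block_at i) = Some (block_at (parent_pos i), unlbl (prefix_lap (parent_pos i)) (block_at (parent_pos i)) ` prefix_lap i)"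
    "parent_pos i < i" "unlbl (prefix_lap (parent_pos i)) (block_at (parent_pos i)) ` prefix_lap i \<in> g_of (block_at (parent_pos i))"
    "unlbl (prefix_lap (parent_pos i)) (block_at (parent_pos i)) ` prefix_lap i \<noteq> R"
    "lbl (prefix_lap (parent_pos i)) (block_at (parent_pos i)) ` (unlbl (prefix_lap (parent_pos i)) (block_at (parent_pos i)) ` prefix_lap i) = prefix_lap i"
proof -
  have i1: "1 \<le> i" using ne prefix_lap_0 by (cases i) auto
  note pr = parent_pos_props[OF i1 i]
  let ?p = "parent_pos i"
  have lap: "?p < length Es" using pr(1) i by simp
  show "f_of (block_at i) = Some (block_at ?p, unlbl (prefix_lap ?p) (block_at ?p) ` prefix_lap i)" using ne by (simp add: f_of_def position_block_at[OF i])
  show "?p < i" by (rule pr(1))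
  show "unlbl (prefix_lap ?p) (block_at ?p) ` prefix_lap i \<in> g_of (block_at ?p)"
    unfolding g_of_block_at[OF lap] relabel_def using pr(4) by (rule imageI)
  show kk: "lbl (prefix_lap ?p) (block_at ?p) ` (unlbl (prefix_lap ?p) (block_at ?p) ` prefix_lap i) = prefix_lap i"
  proof -
    have "lbl (prefix_lap ?p) (block_at ?p) ` (unlbl (prefix_lap ?p) (block_at ?p) ` prefix_lap i) = (lbl (prefix_lap ?p) (block_at ?p) \<circ> unlbl (prefix_lap ?p) (block_at ?p)) ` prefix_lap i"
      by (simp add: image_comp)
    also have "\<dots> = id ` prefix_lap i" by (rule image_cong[OF refl]) (use lbl_edge(4)[OF lap] pr(2) in auto)
    finally show ?thesis by simp
  qed
  show "unlbl (prefix_lap ?p) (block_at ?p) ` prefix_lap i \<noteq> R"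
  proof
    assume "unlbl (prefix_lap ?p) (block_at ?p) ` prefix_lap i = R"
    then have "prefix_lap i = lbl (prefix_lap ?p) (block_at ?p) ` R" using kk by simp
    then have "prefix_lap i = prefix_lap ?p" using lbl_edge(2)[OF lap] by simp
    then show False using prefix_lap_ne_parent[OF i1 i ne] by simp
  qed
qed

lemma f_of_None: "i < length Es \<Longrightarrow> prefix_lap i = R \<Longrightarrow> f_of (block_at i) = None"
  by (simp add: f_of_def position_block_at)

lemma f_code_reaches_root: "i < length Es \<Longrightarrow> \<exists>t. (walk_step f_code lap_owner (lap_choices blocks_of g_code) ^^ t) (f_code (block_at i)) = None"
proof (induction i rule: less_induct)
  case (less i)
  have ffi: "f_code (block_at i) = f_of (block_at i)" using block_at_in_blocks_of[OF less.prems] by (simp add: f_code_def)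
  show ?case
  proof (cases "prefix_lap i = R")
    case True then show ?thesis using f_of_None[OF less.prems True] ffi by (intro exI[of _ 0]) simp
  next
    case False
    note fs = f_of_Some[OF less.prems False]
    let ?p = "parent_pos i" and ?L = "unlbl (prefix_lap (parent_pos i)) (block_at (parent_pos i)) ` prefix_lap i"
    have lap: "?p < length Es" using fs(2) less.prems by simp
    have inB: "Some (block_at ?p, ?L) \<in> lap_choices blocks_of g_code"
      using fs(3,4) block_at_in_blocks_of[OF lap] by (auto simp: lap_choices_def g_code_def)
    obtain t where t: "(walk_step f_code lap_owner (lap_choices blocks_of g_code) ^^ t) (f_code (block_at ?p)) = None" using less.IH[OF fs(2) lap] by blast
    have "walk_step f_code lap_owner (lap_choices blocks_of g_code) (Some (block_at ?p, ?L)) = f_code (block_at ?p)" using inB by (simp add: walk_step_def lap_owner_def)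
    then have "(walk_step f_code lap_owner (lap_choices blocks_of g_code) ^^ Suc t) (f_code (block_at i)) = None"
      using t ffi fs(1) by (simp only: funpow_Suc_apply)
    then show ?thesis by blast
  qed
qed

lemma codes_of_tree: "(blocks_of, g_code, f_code) \<in> codes"
proof -
  have g: "g_code \<in> blocks_of \<rightarrow>\<^sub>E R_H k m H" using g_of_in_R_H by (auto simp: g_code_def blocks_of_def)
  have fP: "f_code \<in> blocks_of \<rightarrow>\<^sub>E (lap_choices blocks_of g_code \<union> {None})"
  proof
    fix N assume N: "N \<in> blocks_of"
    then obtain i where i: "i < length Es" "N = block_at i" by (auto simp: blocks_of_def)
    show "f_code N \<in> lap_choices blocks_of g_code \<union> {None}"
    proof (cases "prefix_lap i = R")
      case True then show ?thesis using f_of_None[OF i(1)] i N by (simp add: f_code_def)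
    next
      case False
      note fs = f_of_Some[OF i(1) False]
      have lap: "parent_pos i < length Es" using fs(2) i by simp
      show ?thesis using fs(1,3,4) block_at_in_blocks_of[OF lap] i N by (auto simp: f_code_def lap_choices_def g_code_def)
    qed
  next
    fix N assume "N \<notin> blocks_of" then show "f_code N = undefined" by (simp add: f_code_def)
  qed
  have reach: "\<forall>b\<in>lap_choices blocks_of g_code. \<exists>t. (walk_step f_code lap_owner (lap_choices blocks_of g_code) ^^ t) b \<in> {None}"
  proof
    fix b assume b: "b \<in> lap_choices blocks_of g_code"
    then obtain N L where NL: "b = Some (N, L)" "N \<in> blocks_of" by (auto simp: lap_choices_def)
    then obtain i where i: "i < length Es" "N = block_at i" by (auto simp: blocks_of_def)
    obtain t where t: "(walk_step f_code lap_owner (lap_choices blocks_of g_code) ^^ t) (f_code (block_at i)) = None" using f_code_reaches_root[OF i(1)] by blast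
    have "walk_step f_code lap_owner (lap_choices blocks_of g_code) b = f_code (block_at i)" using b NL i by (simp add: walk_step_def lap_owner_def)
    then have "(walk_step f_code lap_owner (lap_choices blocks_of g_code) ^^ Suc t) b = None" using t by (simp only: funpow_Suc_apply)
    then show "\<exists>t. (walk_step f_code lap_owner (lap_choices blocks_of g_code) ^^ t) b \<in> {None}" by blast
  qed
  show ?thesis using blocks_of_partition g fP reach by (simp add: codes_def cycle_free_maps_def)
qed

end

sublocale ordered_tree \<subseteq> dec: tree_code k m H e blocks_of g_code f_code
  by (rule tree_codeI[OF codes_of_tree])

context ordered_tree
begin

lemma lap_block_at: "i < length Es \<Longrightarrow> dec.lap (block_at i) = prefix_lap i"
proof (induction i rule: less_induct)
  case (less i)
  have ffi: "f_code (block_at i) = f_of (block_at i)" using block_at_in_blocks_of[OF less.prems] by (simp add: f_code_def)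
  show ?case
  proof (cases "prefix_lap i = R")
    case True
    then show ?thesis using dec.lap_None[OF block_at_in_blocks_of[OF less.prems]] f_of_None[OF less.prems True] ffi by simp
  next
    case False
    note fs = f_of_Some[OF less.prems False]
    have lap: "parent_pos i < length Es" using fs(2) less.prems by simp
    have "dec.lap (block_at i) = lbl (dec.lap (block_at (parent_pos i))) (block_at (parent_pos i)) ` (unlbl (prefix_lap (parent_pos i)) (block_at (parent_pos i)) ` prefix_lap i)"
      using dec.lap_Some[OF block_at_in_blocks_of[OF less.prems]] fs(1) ffi by simp
    also have "\<dots> = prefix_lap i" using less.IH[OF fs(2) lap] fs(5) by simp
    finally show ?thesis .
  qed
qed

lemma edge_block_at: "i < length Es \<Longrightarrow> dec.edge (block_at i) = Es ! i"
  using lap_block_at edge_split by (simp add: block_edge_def)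

lemma decode_codes_of_tree: "decode blocks_of g_code f_code = (T, Hs)"
proof -
  have T1: "dec.edge ` blocks_of = T"
  proof -
    have "dec.edge ` blocks_of = (\<lambda>i. Es ! i) ` {..<length Es}" using edge_block_at by (auto simp: blocks_of_def image_image)
    also have "\<dots> = set Es" by (auto simp: in_set_conv_nth)
    finally show ?thesis using Es_set by simp
  qed
  have "snd (decode blocks_of g_code f_code) E = Hs E" for E
  proof (cases "E \<in> T")
    case True
    then obtain i where i: "i < length Es" "E = Es ! i" using Es_set by (auto simp: in_set_conv_nth)
    have "snd (decode blocks_of g_code f_code) E = dec.hgraph (block_at i)" using dec.decode_snd[OF block_at_in_blocks_of[OF i(1)]] edge_block_at[OF i(1)] i by simp
    also have "\<dots> = relabel (lbl (prefix_lap i) (block_at i)) (relabel (unlbl (prefix_lap i) (block_at i)) (Hs (Es ! i)))"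
      using lap_block_at[OF i(1)] g_of_block_at[OF i(1)] block_at_in_blocks_of[OF i(1)] by (simp add: block_graph_def g_code_def)
    also have "\<dots> = relabel (lbl (prefix_lap i) (block_at i) \<circ> unlbl (prefix_lap i) (block_at i)) (Hs (Es ! i))" by (simp add: relabel_comp)
    also have "\<dots> = relabel id (Hs (Es ! i))"
    proof (rule relabel_cong)
      fix x assume "x \<in> \<Union>(Hs (Es ! i))"
      then have "x \<in> Es ! i" using Hs_elem[OF E_in[OF i(1)]] by blast
      then show "(lbl (prefix_lap i) (block_at i) \<circ> unlbl (prefix_lap i) (block_at i)) x = id x" using lbl_edge(4)[OF i(1)] by simp
    qed
    finally show ?thesis using i by (simp add: relabel_id)
  next
    case False
    then show ?thesis using T1 T_out by (simp add: decode_def)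
  qed
  then show ?thesis using T1 by (simp add: decode_def prod_eq_iff fun_eq_iff)
qed

end

context tree_count
begin

lemma decode_surj:
  assumes y: "y \<in> built_trees"
  shows "\<exists>x\<in>codes. (\<lambda>(\<pi>, g, f). decode \<pi> g f) x = y"
proof -
  obtain T Hs where yT: "y = (T, Hs)" by (cases y)
  have built: "H_built_tree k m H n T Hs" and card_T: "card T = e" and ro: "rooted_at T Hs R"
    using y yT by (auto simp: built_trees_def)
  obtain E0 where E0: "E0 \<in> T" "R \<in> Hs E0" using ro by (auto simp: rooted_at_def)
  have "km_tree k m n T" using built by (simp add: H_built_tree_def)
  then obtain Es0 where Es0: "distinct Es0" "set Es0 = T" "valid_order m Es0"
    by (auto simp: km_tree_valid_order)
  obtain Es where Es: "valid_order m Es" "distinct Es" "set Es = T" "Es \<noteq> []" "Es ! 0 = E0"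
    using valid_order_reroot[OF Es0(3,1)] E0 Es0(2) by blast
  interpret T: ordered_tree k m H e T Hs Es
    by (rule ordered_tree.intro[OF tree_count_axioms]) (unfold_locales, use built card_T Es E0 in auto)
  show ?thesis using T.codes_of_tree T.decode_codes_of_tree yT by force
qed

theorem bij_decode: "bij_betw (\<lambda>(\<pi>, g, f). decode \<pi> g f) codes built_trees"
proof (rule bij_betw_imageI)
  show "inj_on (\<lambda>(\<pi>, g, f). decode \<pi> g f) codes"
  proof (rule inj_onI)
    fix x y assume "x \<in> codes" "y \<in> codes" "(\<lambda>(\<pi>, g, f). decode \<pi> g f) x = (\<lambda>(\<pi>, g, f). decode \<pi> g f) y"
    then show "x = y" using decode_inj by (cases x, cases y) auto
  qed
  show "(\<lambda>(\<pi>, g, f). decode \<pi> g f) ` codes = built_trees"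
  proof
    show "(\<lambda>(\<pi>, g, f). decode \<pi> g f) ` codes \<subseteq> built_trees"
    proof (rule image_subsetI)
      fix x assume x: "x \<in> codes"
      obtain \<pi> g f where "x = (\<pi>, g, f)" by (cases x) auto
      then show "(\<lambda>(\<pi>, g, f). decode \<pi> g f) x \<in> built_trees" using tree_code.decode_in_built_trees[OF tree_codeI] x by simp
    qed
    show "built_trees \<subseteq> (\<lambda>(\<pi>, g, f). decode \<pi> g f) ` codes"
    proof
      fix y assume "y \<in> built_trees"
      then obtain x where x: "x \<in> codes" "(\<lambda>(\<pi>, g, f). decode \<pi> g f) x = y" using decode_surj by blast
      show "y \<in> (\<lambda>(\<pi>, g, f). decode \<pi> g f) ` codes" using x by blast
    qed
  qed
qed

end

section \<open>Counting codes\<close>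

context tree_count
begin

lemma block_partition_props: "\<pi> \<in> block_partitions W d \<Longrightarrow> finite \<pi> \<and> card \<pi> = e"
proof -
  assume p: "\<pi> \<in> block_partitions W d"
  have c: "card \<pi> = e" using card_block_partition[OF d1 _ _ p] by simp
  then have "0 < card \<pi>" using e1 by simp
  then show ?thesis using c card_ge_0_finite by blast
qed

lemma finite_R_H: "finite (R_H k m H)"
proof -
  have "R_H k m H \<subseteq> Pow (Pow {1..k})" using R_H_props(2) by blast
  then show ?thesis by (meson finite_Pow_iff finite_atLeastAtMost finite_subset)
qed

lemma R_H_empty: "card H = 0 \<Longrightarrow> R_H k m H = {}"
proof (rule ccontr)
  assume h: "card H = 0" "R_H k m H \<noteq> {}"
  then obtain G where G: "G \<in> R_H k m H" by auto
  have "G \<subseteq> Pow {1..k}" using R_H_props(2)[OF G] by auto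
  then have "finite G" by (meson finite_Pow_iff finite_atLeastAtMost finite_subset)
  moreover have "card G = 0" using R_H_props(3)[OF G] h by simp
  ultimately show False using R_H_props(1)[OF G] by simp
qed

lemma finite_lap_choices:
  assumes "finite \<pi>" "g \<in> \<pi> \<rightarrow>\<^sub>E R_H k m H"
  shows "finite (lap_choices \<pi> g)"
proof (rule finite_subset)
  show "lap_choices \<pi> g \<subseteq> Some ` (\<pi> \<times> Pow {1..k})"
    using assms(2) R_H_props(2) by (fastforce simp: lap_choices_def)
qed (use assms(1) in simp)

lemma card_lap_choices_fibre:
  assumes g: "g \<in> \<pi> \<rightarrow>\<^sub>E R_H k m H" and N: "N \<in> \<pi>"
  shows "card {b \<in> lap_choices \<pi> g. lap_owner b = N} = card H - 1"
proof -
  have gN: "g N \<in> R_H k m H" using g N by auto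
  have "{b \<in> lap_choices \<pi> g. lap_owner b = N} = Some ` ({N} \<times> (g N - {R}))"
    using N by (auto simp: lap_choices_def lap_owner_def)
  moreover have "card (Some ` ({N} \<times> (g N - {R}))) = card (g N - {R})"
    by (subst card_image) (auto simp: card_cartesian_product)
  moreover have "g N \<subseteq> Pow {1..k}" using R_H_props(2)[OF gN] by auto
  then have "finite (g N)" by (meson finite_Pow_iff finite_atLeastAtMost finite_subset)
  then have "card (g N - {R}) = card H - 1" using R_H_props(1,3)[OF gN] by simp
  ultimately show ?thesis by simp
qed

lemma card_parent_maps:
  assumes p: "\<pi> \<in> block_partitions W d" and g: "g \<in> \<pi> \<rightarrow>\<^sub>E R_H k m H"
  shows "card (cycle_free_maps \<pi> (lap_choices \<pi> g) {None} lap_owner) = (1 + (card H - 1) * e) ^ (e - 1)"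
proof -
  have cp: "card \<pi> = e" and fp: "finite \<pi>" using block_partition_props[OF p] by auto
  have "card (cycle_free_maps \<pi> (lap_choices \<pi> g) {None} lap_owner) =
      (if \<pi> = {} then 1 else card {None :: (nat set \<times> nat set) option} *
        (card {None :: (nat set \<times> nat set) option} + (card H - 1) * card \<pi>) ^ (card \<pi> - 1))"
  proof (rule card_cycle_free_maps)
    show "lap_choices \<pi> g \<inter> {None} = {}" by (auto simp: lap_choices_def)
    show "lap_owner ` lap_choices \<pi> g \<subseteq> \<pi>" by (auto simp: lap_choices_def lap_owner_def)
    show "\<forall>a\<in>\<pi>. card {b \<in> lap_choices \<pi> g. lap_owner b = a} = card H - 1"
      using card_lap_choices_fibre[OF g] by blast
  qed (use fp finite_lap_choices[OF fp g] in auto)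
  also have "\<dots> = (1 + (card H - 1) * e) ^ (e - 1)" using cp e1 by (auto simp: add.commute)
  finally show ?thesis .
qed

lemma finite_codes: "finite codes"
  unfolding codes_def using finite_block_partitions[of W d] block_partition_props finite_R_H
  by (intro finite_SigmaI finite_PiE finite_cycle_free_maps finite_lap_choices) auto

lemma card_codes:
  "card codes = card (block_partitions W d) * card (R_H k m H) ^ e * (1 + (card H - 1) * e) ^ (e - 1)"
proof -
  have finPi: "finite (\<pi> \<rightarrow>\<^sub>E R_H k m H)" if "\<pi> \<in> block_partitions W d" for \<pi>
    using block_partition_props[OF that] finite_R_H by (intro finite_PiE) auto
  have fin_cf: "finite (cycle_free_maps \<pi> (lap_choices \<pi> g) {None} lap_owner)"
    if "\<pi> \<in> block_partitions W d" "g \<in> \<pi> \<rightarrow>\<^sub>E R_H k m H" for \<pi> g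
    using block_partition_props[OF that(1)] finite_lap_choices[OF _ that(2)]
    by (intro finite_cycle_free_maps) auto
  have "card codes = (\<Sum>\<pi>\<in>block_partitions W d. \<Sum>g\<in>(\<pi> \<rightarrow>\<^sub>E R_H k m H).
      card (cycle_free_maps \<pi> (lap_choices \<pi> g) {None} lap_owner))"
    unfolding codes_def using finite_block_partitions[of W d] finPi fin_cf
    by (simp add: card_SigmaI finite_SigmaI)
  also have "\<dots> = (\<Sum>\<pi>\<in>block_partitions W d. card (R_H k m H) ^ e * (1 + (card H - 1) * e) ^ (e - 1))"
    using block_partition_props by (intro sum.cong refl) (simp add: card_parent_maps card_PiE)
  finally show ?thesis by simp
qed

theorem card_built_trees:
  "card built_trees = (\<Prod>i=1..e. (d * (e - i + 1) - 1) choose (d - 1))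
    * card (R_H k m H) ^ e * (1 + (card H - 1) * e) ^ (e - 1)"
proof -
  have "card built_trees
      = card (block_partitions W d) * card (R_H k m H) ^ e * (1 + (card H - 1) * e) ^ (e - 1)"
    using bij_betw_same_card[OF bij_decode] card_codes by simp
  also have "card (block_partitions W d) = (\<Prod>i=1..e. (d * (e - i + 1) - 1) choose (d - 1))"
    unfolding prod_binomial_reverse using card_block_partitions[OF d1, of W e] by simp
  finally show ?thesis .
qed


lemma finite_built_trees: "finite built_trees"
  using bij_betw_finite[OF bij_decode] finite_codes by simp

lemma card_cycle_free_funs_blocks:
  "card (cycle_free_funs {1..e} ({1..e} \<times> {1..card H - 1}) {R} fst) = (1 + (card H - 1) * e) ^ (e - 1)"
proof -
  have fibres: "\<forall>i\<in>{1..e}. card {b \<in> {1..e} \<times> {1..card H - 1}. fst b = i} = card H - 1"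
  proof
    fix i assume "i \<in> {1..e}"
    then have "{b \<in> {1..e} \<times> {1..card H - 1}. fst b = i} = {i} \<times> {1..card H - 1}" by auto
    then show "card {b \<in> {1..e} \<times> {1..card H - 1}. fst b = i} = card H - 1"
      by (simp add: card_cartesian_product)
  qed
  show ?thesis using card_cycle_free_funs[OF _ _ _ _ fibres, where C = "{R}"] e1 by (simp add: add.commute)
qed

lemma code_space:
  defines "Z \<equiv> cycle_free_funs {1..e} ({1..e} \<times> {1..card H - 1}) {R} fst
    \<times> (\<Pi>\<^sub>E i\<in>{1..e}. {1..(d * (e - i + 1) - 1) choose (d - 1)} \<times> R_H k m H)"
  shows "finite Z" "card Z = card built_trees"
proof -
  show "finite Z" unfolding Z_def using finite_R_H
    by (intro finite_cartesian_product finite_PiE finite_cycle_free_funs) auto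
  have "card Z = (1 + (card H - 1) * e) ^ (e - 1)
      * (\<Prod>i\<in>{1..e}. card ({1..(d * (e - i + 1) - 1) choose (d - 1)} \<times> R_H k m H))"
    unfolding Z_def card_cartesian_product card_cycle_free_funs_blocks card_PiE[OF finite_atLeastAtMost] ..
  also have "\<dots> = card built_trees"
    unfolding card_built_trees using finite_R_H by (simp add: card_cartesian_product prod.distrib)
  finally show "card Z = card built_trees" .
qed

lemma real_card_built_trees:
  "real (card built_trees) = (real e * (real (card H) - 1) + 1) ^ (e - 1)
    * (fact k * real (card H) / (real (k choose m) * real (card (Aut k H)))) ^ e
    * (\<Prod>i=1..e. real ((d * (e - i + 1) - 1) choose (d - 1)))"
proof -
  have eq: "real (card built_trees) = real (card (R_H k m H)) ^ e * real (1 + (card H - 1) * e) ^ (e - 1)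
      * (\<Prod>i=1..e. real ((d * (e - i + 1) - 1) choose (d - 1)))"
    unfolding card_built_trees by (simp add: of_nat_prod)
  have a: "real (card (R_H k m H)) = fact k * real (card H) / (real (k choose m) * real (card (Aut k H)))"
    using real_card_R_H[OF Hk] mk k1 by simp
  show ?thesis
  proof (cases "card H = 0")
    case True
    then show ?thesis unfolding eq using R_H_empty e1 by simp
  next
    case False
    then have F: "real (1 + (card H - 1) * e) = real e * (real (card H) - 1) + 1"
      by (simp add: of_nat_diff algebra_simps)
    show ?thesis unfolding eq a F by (simp only: ac_simps)
  qed
qed

end

section \<open>The closed formula\<close>

lemma count_closed_form:
  fixes k m e :: nat and f l aut :: real
  assumes "m < k" "aut > 0"
  shows "f ^ (e - 1) * (fact k * l / (real (k choose m) * aut)) ^ e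
      * (\<Prod>i=1..e. real (((k - m) * (e - i + 1) - 1) choose (k - m - 1)))
    = fact (e * (k - m)) * f ^ (e - 1) / fact e * (fact m * l / aut) ^ e"
proof -
  have d: "k - m \<ge> 1" using assms(1) by simp
  have c0: "real (k choose m) \<noteq> 0" using assms(1) by simp
  have "real (fact m * fact (k - m) * (k choose m)) = real (fact k)"
    using binomial_fact_lemma[of m k] assms(1) by simp
  then have fk: "(fact k :: real) = fact m * fact (k - m) * real (k choose m)"
    by (simp only: of_nat_mult of_nat_fact)
  have q1: "fact k * l / (real (k choose m) * aut) = fact (k - m) * (fact m * l / aut)"
    unfolding fk using c0 assms(2) by (simp add: field_simps)
  have "(\<Prod>i=1..e. real (((k - m) * (e - i + 1) - 1) choose (k - m - 1)))
      = real (\<Prod>j\<in>{1..e}. (j * (k - m) - 1) choose (k - m - 1))"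
    using prod_binomial_reverse[where e=e and dd="k - m"] by (simp flip: of_nat_prod)
  also have "\<dots> = fact (e * (k - m)) / (fact e * fact (k - m) ^ e)"
    using arg_cong[OF prod_binomial_fact[OF d, of e], of real] by (simp add: of_nat_mult field_simps)
  finally have pr: "(\<Prod>i=1..e. real (((k - m) * (e - i + 1) - 1) choose (k - m - 1)))
      = fact (e * (k - m)) / (fact e * fact (k - m) ^ e)" .
  show ?thesis unfolding q1 pr by (simp add: power_mult_distrib field_simps)
qed

theorem theorem1:
  fixes k m e :: nat and H :: "nat set set"
  assumes "m \<le> k - 1" and "1 \<le> k" and "1 \<le> e"
    and "rgraph m {1..k} H"
  defines "l \<equiv> card H"
  defines "n \<equiv> e * (k - m) + m"
  defines "f \<equiv> real e * (real l - 1) + 1"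
  defines "Y \<equiv> {(T, Hs). H_built_tree k m H n T Hs \<and> card T = e \<and> rooted_at T Hs {1..m}}"
  defines "A \<equiv> {1..e}"
  defines "B \<equiv> {1..e} \<times> {1..l - 1}"
  defines "C \<equiv> {{1..m}}"
  defines "\<gamma> \<equiv> (fst :: nat \<times> nat \<Rightarrow> nat)"
  defines "X \<equiv> (\<lambda>i. {1..((k - m) * (e - i + 1) - 1) choose (k - m - 1)})"
  defines "Z \<equiv> cycle_free_funs A B C \<gamma> \<times> (\<Pi>\<^sub>E i\<in>{1..e}. X i \<times> R_H k m H)"
  shows "(\<exists>\<phi>. bij_betw \<phi> Y Z)
    \<and> real (card Y) = f ^ (e - 1)
          * (fact k * real l / (real (k choose m) * real (card (Aut k H)))) ^ e
          * (\<Prod>i=1..e. real (((k - m) * (e - i + 1) - 1) choose (k - m - 1)))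
    \<and> f ^ (e - 1)
          * (fact k * real l / (real (k choose m) * real (card (Aut k H)))) ^ e
          * (\<Prod>i=1..e. real (((k - m) * (e - i + 1) - 1) choose (k - m - 1)))
      = fact (e * (k - m)) * f ^ (e - 1) / fact e * (fact m * real l / real (card (Aut k H))) ^ e"
proof -
  interpret S: tree_count k m H e by unfold_locales (use assms in auto)
  have Y_eq: "Y = S.built_trees" by (simp add: Y_def S.built_trees_def n_def)
  have "finite Z" "card Z = card Y"
    using S.code_space by (simp_all add: Z_def A_def B_def C_def \<gamma>_def X_def l_def Y_eq)
  then have "\<exists>\<phi>. bij_betw \<phi> Y Z" using finite_same_card_bij S.finite_built_trees Y_eq by metis
  moreover have "m < k" using assms(1,2) by linarith
  moreover have "real (card (Aut k H)) > 0" using card_Aut_pos by simp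
  ultimately show ?thesis using S.real_card_built_trees
      count_closed_form[where e = e and f = f and l = "real l"]
    by (simp add: Y_eq f_def l_def)
qed

end
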